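(* Let $\mathcal{A}$ be a unital associative algebra with unit $e$ and let $\mathcal{B}= \mathcal{D}(\mathcal{A})$. Then: (1) $\mathcal{B}$ is ordered, i.e. for every $n$, if $x_1,\dots,x_n\in\mathcal{B}$ satisfy $\sum_{i=1}^n x_i x_i^* =0$, then $x_1= \cdots=x_n=0$. (2) If $x_1,\dots,x_n\in\mathcal{B}$ satisfy $\sum_{j=1}^n x_j^* x_j = e$, then $x_j\in \mathbb{C} e$ for all $j$. (3) If $x\in \mathcal{A}$ (viewed in $\mathcal{B}$ via the canonical embedding) and $y\in \mathcal{B}$ satisfy $x^* x =y^*y$, then $x= \lambda y$ for some $\lambda\in \mathbb{C}$ with $|\lambda| = 1$.
   Context: All algebras are complex and unital. For a unital associative algebra $\mathcal{A}$, $\mathcal{A}^*$ is an associative algebra with an additive, conjugate-linear, anti-multiplicative bijection $\phi:\mathcal{A}\to\mathcal{A}^*$. The $*$-double $\mathcal{D}(\mathcal{A})$ is the unital free product $\mathcal{A}*\mathcal{A}^*$ of associative algebras with involution determined by $a^*=\phi(a)$ for $a\in\mathcal{A}$ and $b^*=\phi^{-1}(b)$ for $b\in\mathcal{A}^*$. *)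

theory Defs
  imports Complex_Main
begin

class cplx_unital_alg = ring + monoid_mult +
  fixes cscale :: "complex \<Rightarrow> 'a \<Rightarrow> 'a"
  assumes cscale_add_right: "cscale c (x + y) = cscale c x + cscale c y"
    and cscale_add_left: "cscale (c + d) x = cscale c x + cscale d x"
    and cscale_cscale: "cscale c (cscale d x) = cscale (c * d) x"
    and cscale_one: "cscale 1 x = x"
    and cscale_mult_left: "cscale c x * y = cscale c (x * y)"
    and cscale_mult_right: "x * cscale c y = cscale c (x * y)"

text \<open>Generators: \<open>Inl a\<close> stands for \<open>a \<in> A\<close>, \<open>Inr a\<close> stands for \<open>\<phi>(a) \<in> A^*\<close>.
  We realise \<open>A^*\<close> as the conjugate-opposite copy of \<open>A\<close>, with \<open>\<phi>\<close> the identity on the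
  underlying set (any \<open>(A^*,\<phi>)\<close> as in the paper is canonically isomorphic to it).
  Elements of the free (noncommutative) complex algebra on these generators are finitely
  supported coefficient functions on words.\<close>

type_synonym 'a fa = "('a + 'a) list \<Rightarrow> complex"

definition fa_carrier :: "'a fa set" where
  "fa_carrier = {f. finite {w. f w \<noteq> 0}}"

definition fa_word :: "('a + 'a) list \<Rightarrow> 'a fa" where
  "fa_word w = (\<lambda>v. if v = w then 1 else 0)"

definition fa_one :: "'a fa" where
  "fa_one = fa_word []"

definition fa_add :: "'a fa \<Rightarrow> 'a fa \<Rightarrow> 'a fa" where
  "fa_add f g = (\<lambda>w. f w + g w)"

definition fa_diff :: "'a fa \<Rightarrow> 'a fa \<Rightarrow> 'a fa" where
  "fa_diff f g = (\<lambda>w. f w - g w)"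

definition fa_smult :: "complex \<Rightarrow> 'a fa \<Rightarrow> 'a fa" where
  "fa_smult c f = (\<lambda>w. c * f w)"

definition fa_mul :: "'a fa \<Rightarrow> 'a fa \<Rightarrow> 'a fa" where
  "fa_mul f g = (\<lambda>w. \<Sum>i\<le>length w. f (take i w) * g (drop i w))"

fun swap_gen :: "'a + 'a \<Rightarrow> 'a + 'a" where
  "swap_gen (Inl a) = Inr a"
| "swap_gen (Inr a) = Inl a"

definition fa_star :: "'a fa \<Rightarrow> 'a fa" where
  "fa_star f = (\<lambda>w. cnj (f (rev (map swap_gen w))))"

definition dbl_rels :: "'a::cplx_unital_alg fa set" where
  "dbl_rels =
     {fa_diff (fa_word [Inl (a + b)]) (fa_add (fa_word [Inl a]) (fa_word [Inl b])) | a b. True}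
   \<union> {fa_diff (fa_word [Inl (cscale c a)]) (fa_smult c (fa_word [Inl a])) | c a. True}
   \<union> {fa_diff (fa_word [Inl a, Inl b]) (fa_word [Inl (a * b)]) | a b. True}
   \<union> {fa_diff (fa_word [Inl 1]) fa_one}
   \<union> {fa_diff (fa_word [Inr (a + b)]) (fa_add (fa_word [Inr a]) (fa_word [Inr b])) | a b. True}
   \<union> {fa_diff (fa_word [Inr (cscale c a)]) (fa_smult (cnj c) (fa_word [Inr a])) | c a. True}
   \<union> {fa_diff (fa_word [Inr a, Inr b]) (fa_word [Inr (b * a)]) | a b. True}
   \<union> {fa_diff (fa_word [Inr 1]) fa_one}"

text \<open>The two-sided ideal generated by the relations; \<open>D(A)\<close> is \<open>fa_carrier\<close> modulo it.\<close>
inductive_set dbl_ideal :: "'a::cplx_unital_alg fa set" where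
  rel: "r \<in> dbl_rels \<Longrightarrow> r \<in> dbl_ideal"
| zero: "(\<lambda>_. 0) \<in> dbl_ideal"
| add: "f \<in> dbl_ideal \<Longrightarrow> g \<in> dbl_ideal \<Longrightarrow> fa_add f g \<in> dbl_ideal"
| smult: "f \<in> dbl_ideal \<Longrightarrow> fa_smult c f \<in> dbl_ideal"
| mult_left: "f \<in> dbl_ideal \<Longrightarrow> g \<in> fa_carrier \<Longrightarrow> fa_mul g f \<in> dbl_ideal"
| mult_right: "f \<in> dbl_ideal \<Longrightarrow> g \<in> fa_carrier \<Longrightarrow> fa_mul f g \<in> dbl_ideal"

definition dbl_eq :: "'a::cplx_unital_alg fa \<Rightarrow> 'a fa \<Rightarrow> bool" where
  "dbl_eq f g \<longleftrightarrow> fa_diff f g \<in> dbl_ideal"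

definition dbl_emb :: "'a \<Rightarrow> 'a fa" where
  "dbl_emb a = fa_word [Inl a]"

end

theory Submission
  imports Defs
begin

text \<open>Choose a basis of \<open>A\<close> containing the unit \<open>e\<close>. The words in the remaining basis
  elements whose letters alternate between \<open>A\<close> and \<open>A\<^sup>*\<close> (the reduced words) form a basis
  of \<open>D(A)\<close>: normal forms are computed by letting the free algebra act on finitely supported
  coefficient functions on reduced words, an action that kills the defining relations.
  The involution preserves reduced words, and for reduced \<open>u\<close> the words \<open>u u\<^sup>*\<close> and \<open>u\<^sup>* u\<close>
  are reduced again. A product of normal forms supported in lengths \<open>\<le> m\<close> and \<open>\<le> n\<close> lives in
  lengths \<open>\<le> m + n\<close>, and its coefficients of length exactly \<open>m + n\<close> are those of the
  concatenation product. So if \<open>u\<close> is a longest word in the supports of \<open>x\<^sub>1, \<dots>, x\<^sub>n\<close>, the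
  coefficient of \<open>u u\<^sup>*\<close> in \<open>\<Sum> x\<^sub>i x\<^sub>i\<^sup>*\<close> is \<open>\<Sum> |x\<^sub>i(u)|\<^sup>2\<close>; this gives (1), and (2) in the same
  way. For (3), \<open>x\<^sup>* x\<close> has length at most two, which forces \<open>y\<close> to be a combination of \<open>e\<close>
  and letters from \<open>A\<close>; then \<open>x\<^sup>* x = y\<^sup>* y\<close> says that the coefficient vectors of \<open>x\<close> and
  \<open>y\<close> have the same Gram matrix, so they differ by a unimodular scalar. If \<open>e = 0\<close> then
  \<open>D(A) = 0\<close> and there is nothing to prove.\<close>

definition fin_supp :: "('b \<Rightarrow> complex) \<Rightarrow> bool" where
  "fin_supp d \<longleftrightarrow> finite {w. d w \<noteq> 0}"

definition lin_ext :: "('b \<Rightarrow> 'c \<Rightarrow> complex) \<Rightarrow> ('b \<Rightarrow> complex) \<Rightarrow> 'c \<Rightarrow> complex" where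
  "lin_ext F d = (\<lambda>w'. \<Sum>w | d w \<noteq> 0. d w * F w w')"

lemma lin_ext_eq_sum:
  "finite S \<Longrightarrow> {w. d w \<noteq> 0} \<subseteq> S \<Longrightarrow> lin_ext F d w' = (\<Sum>w\<in>S. d w * F w w')"
  unfolding lin_ext_def by (rule sum.mono_neutral_left) auto

lemma lin_ext_nonzeroD:
  assumes "lin_ext F d w' \<noteq> 0"
  shows "\<exists>w. d w \<noteq> 0 \<and> F w w' \<noteq> 0"
proof (rule ccontr)
  assume "\<nexists>w. d w \<noteq> 0 \<and> F w w' \<noteq> 0"
  then have "lin_ext F d w' = 0" unfolding lin_ext_def by (intro sum.neutral) auto
  with assms show False by simp
qed

lemma fin_supp_add: "fin_supp d1 \<Longrightarrow> fin_supp d2 \<Longrightarrow> fin_supp (\<lambda>w. d1 w + d2 w)"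
  unfolding fin_supp_def by (rule finite_subset[of _ "{w. d1 w \<noteq> 0} \<union> {w. d2 w \<noteq> 0}"]) auto

lemma fin_supp_diff: "fin_supp d1 \<Longrightarrow> fin_supp d2 \<Longrightarrow> fin_supp (\<lambda>w. d1 w - d2 w)"
  unfolding fin_supp_def by (rule finite_subset[of _ "{w. d1 w \<noteq> 0} \<union> {w. d2 w \<noteq> 0}"]) auto

lemma fin_supp_smult: "fin_supp d \<Longrightarrow> fin_supp (\<lambda>w. c * d w)"
  unfolding fin_supp_def by (rule finite_subset[of _ "{w. d w \<noteq> 0}"]) auto

lemma fin_supp_zero: "fin_supp (\<lambda>w. 0)"
  unfolding fin_supp_def by simp

lemma fin_supp_sum:
  "finite I \<Longrightarrow> (\<And>i. i \<in> I \<Longrightarrow> fin_supp (d i)) \<Longrightarrow> fin_supp (\<lambda>w. \<Sum>i\<in>I. d i w)"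
  by (induction I rule: finite_induct) (auto simp: fin_supp_zero intro!: fin_supp_add)

lemma fin_supp_delta: "fin_supp (\<lambda>w. if w = u then c else 0)"
  unfolding fin_supp_def by (rule finite_subset[of _ "{u}"]) auto

lemma lin_ext_add:
  assumes "fin_supp d1" "fin_supp d2"
  shows "lin_ext F (\<lambda>w. d1 w + d2 w) w' = lin_ext F d1 w' + lin_ext F d2 w'"
proof -
  let ?S = "{w. d1 w \<noteq> 0} \<union> {w. d2 w \<noteq> 0}"
  have S: "finite ?S" using assms unfolding fin_supp_def by auto
  have "lin_ext F (\<lambda>w. d1 w + d2 w) w' = (\<Sum>w\<in>?S. (d1 w + d2 w) * F w w')"
    by (rule lin_ext_eq_sum[OF S]) auto
  also have "\<dots> = (\<Sum>w\<in>?S. d1 w * F w w') + (\<Sum>w\<in>?S. d2 w * F w w')"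
    by (simp add: sum.distrib distrib_right)
  also have "\<dots> = lin_ext F d1 w' + lin_ext F d2 w'"
    by (subst (1 2) lin_ext_eq_sum[OF S]) auto
  finally show ?thesis .
qed

lemma lin_ext_smult: "fin_supp d \<Longrightarrow> lin_ext F (\<lambda>w. c * d w) w' = c * lin_ext F d w'"
  unfolding fin_supp_def
  by (subst (1 2) lin_ext_eq_sum[of "{w. d w \<noteq> 0}"]) (auto simp: sum_distrib_left mult.assoc)

lemma lin_ext_diff:
  assumes "fin_supp d1" "fin_supp d2"
  shows "lin_ext F (\<lambda>w. d1 w - d2 w) w' = lin_ext F d1 w' - lin_ext F d2 w'"
proof -
  have "lin_ext F (\<lambda>w. d1 w + (-1) * d2 w) w' = lin_ext F d1 w' + (-1) * lin_ext F d2 w'"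
    using assms by (simp only: lin_ext_add fin_supp_smult lin_ext_smult)
  then show ?thesis by simp
qed

lemma lin_ext_zero: "lin_ext F (\<lambda>w. 0) w' = 0"
  unfolding lin_ext_def by simp

lemma lin_ext_sum:
  "finite I \<Longrightarrow> (\<And>i. i \<in> I \<Longrightarrow> fin_supp (d i)) \<Longrightarrow>
   lin_ext F (\<lambda>w. \<Sum>i\<in>I. d i w) w' = (\<Sum>i\<in>I. lin_ext F (d i) w')"
  by (induction I rule: finite_induct) (auto simp: lin_ext_zero lin_ext_add fin_supp_sum)

lemma lin_ext_delta: "lin_ext F (\<lambda>w. if w = u then c else 0) w' = c * F u w'"
  by (subst lin_ext_eq_sum[of "{u}"]) auto

lemma lin_ext_kernel_add:
  "lin_ext (\<lambda>w w'. F w w' + G w w') d w' = lin_ext F d w' + lin_ext G d w'"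
  unfolding lin_ext_def by (simp add: sum.distrib distrib_left)

lemma lin_ext_kernel_smult: "lin_ext (\<lambda>w w'. c * F w w') d w' = c * lin_ext F d w'"
  unfolding lin_ext_def by (simp add: sum_distrib_left mult.left_commute)

lemma lin_ext_cong: "(\<And>w. d w \<noteq> 0 \<Longrightarrow> F w = G w) \<Longrightarrow> lin_ext F d = lin_ext G d"
  unfolding lin_ext_def by (rule ext, rule sum.cong) auto

lemma fin_supp_lin_ext:
  assumes "fin_supp d" "\<And>w. d w \<noteq> 0 \<Longrightarrow> fin_supp (F w)"
  shows "fin_supp (lin_ext F d)"
proof -
  have "{w'. lin_ext F d w' \<noteq> 0} \<subseteq> (\<Union>w\<in>{w. d w \<noteq> 0}. {w'. F w w' \<noteq> 0})"
    using lin_ext_nonzeroD by fastforce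
  moreover have "finite (\<Union>w\<in>{w. d w \<noteq> 0}. {w'. F w w' \<noteq> 0})"
    using assms unfolding fin_supp_def by auto
  ultimately show ?thesis unfolding fin_supp_def by (rule finite_subset)
qed

lemma lin_ext_lin_ext:
  assumes d: "fin_supp d" and G: "\<And>w. d w \<noteq> 0 \<Longrightarrow> fin_supp (G w)"
  shows "lin_ext F (lin_ext G d) w' = lin_ext (\<lambda>w. lin_ext F (G w)) d w'"
proof -
  let ?T = "\<Union>w\<in>{w. d w \<noteq> 0}. {v. G w v \<noteq> 0}"
  have T: "finite ?T" using d G unfolding fin_supp_def by auto
  have "{v. lin_ext G d v \<noteq> 0} \<subseteq> ?T"
    using lin_ext_nonzeroD by fastforce
  then have "lin_ext F (lin_ext G d) w' = (\<Sum>v\<in>?T. lin_ext G d v * F v w')"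
    by (rule lin_ext_eq_sum[OF T])
  also have "\<dots> = (\<Sum>v\<in>?T. (\<Sum>w | d w \<noteq> 0. d w * G w v) * F v w')"
    unfolding lin_ext_def ..
  also have "\<dots> = (\<Sum>w | d w \<noteq> 0. d w * (\<Sum>v\<in>?T. G w v * F v w'))"
    by (simp only: sum_distrib_right sum_distrib_left mult.assoc) (rule sum.swap)
  also have "\<dots> = (\<Sum>w | d w \<noteq> 0. d w * lin_ext F (G w) w')"
    by (rule sum.cong[OF refl], subst lin_ext_eq_sum[OF T]) auto
  also have "\<dots> = lin_ext (\<lambda>w. lin_ext F (G w)) d w'"
    unfolding lin_ext_def ..
  finally show ?thesis .
qed

lemma lin_ext_delta_id:
  assumes "fin_supp d"
  shows "lin_ext (\<lambda>w w'. if w' = w then 1 else 0) d = d"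
proof
  fix w'
  show "lin_ext (\<lambda>w w'. if w' = w then 1 else 0) d w' = d w'"
  proof (cases "d w' = 0")
    case True
    then show ?thesis unfolding lin_ext_def
      by (simp only: True) (intro sum.neutral, use True in auto)
  next
    case False
    have "lin_ext (\<lambda>w w'. if w' = w then 1 else 0) d w' =
        (\<Sum>w\<in>{w'}. d w * (if w' = w then 1 else 0))"
      unfolding lin_ext_def by (rule sum.mono_neutral_right)
        (use False assms in \<open>auto simp: fin_supp_def\<close>)
    then show ?thesis by simp
  qed
qed

lemma fa_carrier_iff_fin_supp: "f \<in> fa_carrier \<longleftrightarrow> fin_supp f"
  unfolding fa_carrier_def fin_supp_def by simp

lemma fa_word_app: "fa_word u w = (if w = u then 1 else 0)"
  unfolding fa_word_def by simp

lemma fa_add_app: "fa_add f g = (\<lambda>w. f w + g w)" unfolding fa_add_def ..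

lemma fa_diff_app: "fa_diff f g = (\<lambda>w. f w - g w)" unfolding fa_diff_def ..

lemma fa_smult_app: "fa_smult c f = (\<lambda>w. c * f w)" unfolding fa_smult_def ..

lemma fin_supp_fa_word: "fin_supp (fa_word u)"
  unfolding fa_word_def by (rule fin_supp_delta)

lemma fin_supp_fa_one: "fin_supp fa_one" unfolding fa_one_def by (rule fin_supp_fa_word)

lemma fa_mul_add_left: "fa_mul (\<lambda>w. f w + g w) h = (\<lambda>w. fa_mul f h w + fa_mul g h w)"
  unfolding fa_mul_def by (simp add: distrib_right sum.distrib)

lemma fa_mul_diff_left: "fa_mul (\<lambda>w. f w - g w) h = (\<lambda>w. fa_mul f h w - fa_mul g h w)"
  unfolding fa_mul_def by (simp add: left_diff_distrib sum_subtractf)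

lemma fa_mul_diff_right: "fa_mul h (\<lambda>w. f w - g w) = (\<lambda>w. fa_mul h f w - fa_mul h g w)"
  unfolding fa_mul_def by (simp add: right_diff_distrib sum_subtractf)

lemma fa_mul_smult_left: "fa_mul (\<lambda>w. c * f w) h = (\<lambda>w. c * fa_mul f h w)"
  unfolding fa_mul_def by (simp add: sum_distrib_left mult.assoc)

lemma fin_supp_fa_mul: assumes "fin_supp f" "fin_supp g" shows "fin_supp (fa_mul f g)"
proof -
  let ?S = "(\<lambda>(u,v). u @ v) ` ({u. f u \<noteq> 0} \<times> {v. g v \<noteq> 0})"
  have "{w. fa_mul f g w \<noteq> 0} \<subseteq> ?S"
  proof
    fix w assume "w \<in> {w. fa_mul f g w \<noteq> 0}"
    then obtain i where "f (take i w) * g (drop i w) \<noteq> 0"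
      unfolding fa_mul_def by (auto elim: sum.not_neutral_contains_not_neutral)
    then show "w \<in> ?S"
      by (auto intro!: image_eqI[of _ _ "(take i w, drop i w)"])
  qed
  moreover have "finite ?S" using assms unfolding fin_supp_def by auto
  ultimately show ?thesis unfolding fin_supp_def by (rule finite_subset)
qed

definition word_shift :: "('b) list \<Rightarrow> ('b list \<Rightarrow> complex) \<Rightarrow> 'b list \<Rightarrow> complex" where
  "word_shift u f w = (if take (length u) w = u then f (drop (length u) w) else 0)"

lemma fa_mul_fa_word_left: "fa_mul (fa_word u) f = word_shift u f"
proof
  fix w
  have "fa_mul (fa_word u) f w = (\<Sum>i\<le>length w. (if take i w = u then 1 else 0) * f (drop i w))"
    unfolding fa_mul_def fa_word_def by simp
  also have "\<dots> = (\<Sum>i\<in>{i. i \<le> length w \<and> i = length u \<and> take (length u) w = u}. f (drop i w))"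
    by (rule sum.mono_neutral_cong_right) auto
  also have "\<dots> = word_shift u f w"
  proof (cases "take (length u) w = u")
    case True
    then have "min (length w) (length u) = length u" by (metis length_take)
    then have "length u \<le> length w" by (simp add: min_def split: if_splits)
    then have "{i. i \<le> length w \<and> i = length u \<and> take (length u) w = u} = {length u}" using True
      by auto
    then show ?thesis using True unfolding word_shift_def by simp
  qed (simp add: word_shift_def)
  finally show "fa_mul (fa_word u) f w = word_shift u f w" .
qed

lemma word_shift_fa_word: "word_shift u (fa_word v) = fa_word (u @ v)"
proof
  fix w show "word_shift u (fa_word v) w = fa_word (u @ v) w"
    unfolding word_shift_def fa_word_def
    by (auto simp: append_take_drop_id dest: sym[of w]) (metis append_take_drop_id)
qed

lemma fa_mul_word: "fa_mul (fa_word u) (fa_word v) = fa_word (u @ v)"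
  by (simp add: fa_mul_fa_word_left word_shift_fa_word)

lemma word_shift_Cons: "word_shift (g # u) f = word_shift [g] (word_shift u f)"
proof
  fix w show "word_shift (g # u) f w = word_shift [g] (word_shift u f) w"
    unfolding word_shift_def by (cases w) auto
qed

lemma fa_mul_lin_ext_left:
  assumes "fin_supp f"
  shows "fa_mul f g = lin_ext (\<lambda>u. fa_mul (fa_word u) g) f"
proof
  fix w
  let ?S = "{u. f u \<noteq> 0}"
  have fS: "finite ?S" using assms unfolding fin_supp_def .
  have "lin_ext (\<lambda>u. fa_mul (fa_word u) g) f w =
        (\<Sum>u\<in>?S. f u * (\<Sum>i\<le>length w. (if take i w = u then 1 else 0) * g (drop i w)))"
    unfolding lin_ext_def fa_mul_def fa_word_def by simp
  also have "\<dots> = (\<Sum>i\<le>length w. \<Sum>u\<in>?S. f u * ((if take i w = u then 1 else 0) * g (drop i w)))"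
    by (simp only: sum_distrib_left) (rule sum.swap)
  also have "\<dots> = (\<Sum>i\<le>length w. f (take i w) * g (drop i w))"
  proof (rule sum.cong[OF refl])
    fix i
    have "(\<Sum>u\<in>?S. f u * ((if take i w = u then 1 else 0) * g (drop i w))) =
          (\<Sum>u\<in>?S. (if take i w = u then f u * g (drop i w) else 0))"
      by (rule sum.cong) auto
    also have "\<dots> = (if take i w \<in> ?S then f (take i w) * g (drop i w) else 0)"
      using sum.delta'[OF fS, of "take i w" "\<lambda>u. f u * g (drop i w)"] by simp
    also have "\<dots> = f (take i w) * g (drop i w)" by auto
    finally show "(\<Sum>u\<in>?S. f u * ((if take i w = u then 1 else 0) * g (drop i w))) =
        f (take i w) * g (drop i w)" .
  qed
  finally show "fa_mul f g w = lin_ext (\<lambda>u. fa_mul (fa_word u) g) f w"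
    unfolding fa_mul_def by simp
qed

lemma fa_mul_sum_left: "fa_mul (\<lambda>w. \<Sum>i\<in>I. f i w) h = (\<lambda>w. \<Sum>i\<in>I. fa_mul (f i) h w)"
  unfolding fa_mul_def by (simp add: sum_distrib_right) (rule ext, rule sum.swap)

lemma word_shift_lin_ext: "fin_supp g \<Longrightarrow> word_shift u g = lin_ext (\<lambda>v. fa_word (u @ v)) g"
proof
  fix w assume g: "fin_supp g"
  let ?S = "{v. g v \<noteq> 0}"
  have fS: "finite ?S" using g unfolding fin_supp_def .
  have "lin_ext (\<lambda>v. fa_word (u @ v)) g w = (\<Sum>v\<in>?S. g v * fa_word (u @ v) w)"
    unfolding lin_ext_def ..
  also have "\<dots> = (\<Sum>v\<in>?S. if v = drop (length u) w
      then (if take (length u) w = u then g v else 0) else 0)"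
    by (rule sum.cong) (auto simp: fa_word_app, metis append_take_drop_id)
  also have "\<dots> = word_shift u g w"
    unfolding word_shift_def by (subst sum.delta[OF fS]) auto
  finally show "word_shift u g w = lin_ext (\<lambda>v. fa_word (u @ v)) g w" by simp
qed

definition word_star :: "('a + 'a) list \<Rightarrow> ('a + 'a) list" where
  "word_star w = rev (map swap_gen w)"

lemma swap_gen_swap_gen[simp]: "swap_gen (swap_gen g) = g"
  by (cases g) auto

lemma word_star_word_star[simp]: "word_star (word_star w) = w"
  unfolding word_star_def by (simp add: rev_map comp_def)

lemma length_word_star[simp]: "length (word_star w) = length w"
  unfolding word_star_def by simp

lemma take_word_star: "take i (word_star w) = word_star (drop (length w - i) w)"
  unfolding word_star_def by (simp add: take_rev drop_map)

lemma drop_word_star: "drop i (word_star w) = word_star (take (length w - i) w)"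
  unfolding word_star_def by (simp add: drop_rev take_map)

lemma word_star_simps: "word_star [Inl a] = [Inr a]" "word_star [Inr a] = [Inl a]"
  "word_star [Inl a, Inl b] = [Inr b, Inr a]" "word_star [Inr a, Inr b] = [Inl b, Inl a]"
  "word_star [] = []"
  unfolding word_star_def by auto

lemma fa_star_app: "fa_star f w = cnj (f (word_star w))"
  unfolding fa_star_def word_star_def by simp

lemma fa_star_word: "fa_star (fa_word u) = fa_word (word_star u)"
proof
  fix w
  have "word_star w = u \<longleftrightarrow> w = word_star u" by (metis word_star_word_star)
  then show "fa_star (fa_word u) w = fa_word (word_star u) w"
    unfolding fa_star_app fa_word_app by simp
qed

lemma fin_supp_fa_star: "fin_supp f \<Longrightarrow> fin_supp (fa_star f)"
proof -
  assume "fin_supp f"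
  have "{w. fa_star f w \<noteq> 0} = word_star ` {w. f w \<noteq> 0}"
    unfolding fa_star_app by (auto intro!: image_eqI[of _ word_star] simp: image_iff)
  then show ?thesis using \<open>fin_supp f\<close> unfolding fin_supp_def by simp
qed

lemma fa_star_add: "fa_star (\<lambda>w. f w + g w) = (\<lambda>w. fa_star f w + fa_star g w)"
  unfolding fa_star_def by simp

lemma fa_star_diff: "fa_star (\<lambda>w. f w - g w) = (\<lambda>w. fa_star f w - fa_star g w)"
  unfolding fa_star_def by simp

lemma fa_star_smult: "fa_star (\<lambda>w. c * f w) = (\<lambda>w. cnj c * fa_star f w)"
  unfolding fa_star_def by simp

lemma fa_star_zero: "fa_star (\<lambda>w. 0) = (\<lambda>w. 0)"
  unfolding fa_star_def by simp

lemma fa_star_ops: "fa_star (fa_diff f g) = fa_diff (fa_star f) (fa_star g)"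
  "fa_star (fa_add f g) = fa_add (fa_star f) (fa_star g)"
  "fa_star (fa_smult c f) = fa_smult (cnj c) (fa_star f)"
  "fa_star fa_one = fa_one"
  unfolding fa_add_app fa_diff_app fa_smult_app fa_one_def
  by (auto simp: fa_star_add fa_star_diff fa_star_smult fa_star_word word_star_simps)

lemma fa_star_mul: fixes f g :: "('x + 'x) list \<Rightarrow> complex"
  shows "fa_star (fa_mul f g) = fa_mul (fa_star g) (fa_star f)"
proof
  fix w :: "('x + 'x) list"
  let ?n = "length w"
  have "fa_star (fa_mul f g) w =
      (\<Sum>i\<le>?n. cnj (f (word_star (drop (?n - i) w))) * cnj (g (word_star (take (?n - i) w))))"
    unfolding fa_star_app fa_mul_def by (simp add: take_word_star drop_word_star)
  also have "\<dots> = (\<Sum>j\<le>?n. cnj (f (word_star (drop j w))) * cnj (g (word_star (take j w))))"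
    by (rule sum.reindex_bij_witness[where i="\<lambda>j. ?n - j" and j="\<lambda>i. ?n - i"]) auto
  also have "\<dots> = fa_mul (fa_star g) (fa_star f) w"
    unfolding fa_star_app fa_mul_def by (simp add: mult.commute)
  finally show "fa_star (fa_mul f g) w = fa_mul (fa_star g) (fa_star f) w" .
qed

section \<open>The defining ideal\<close>

lemma fin_supp_dbl_ideal: "f \<in> dbl_ideal \<Longrightarrow> fin_supp f"
proof (induction rule: dbl_ideal.induct)
  case (rel r)
  then show ?case unfolding dbl_rels_def fa_add_app fa_diff_app fa_smult_app fa_one_def
    by (auto intro!: fin_supp_diff fin_supp_add fin_supp_smult fin_supp_fa_word)
qed (auto simp: fa_add_app fa_smult_app fa_carrier_iff_fin_supp
    intro!: fin_supp_zero fin_supp_add fin_supp_smult fin_supp_fa_mul)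

lemma dbl_ideal_add: "f \<in> dbl_ideal \<Longrightarrow> g \<in> dbl_ideal \<Longrightarrow> (\<lambda>w. f w + g w) \<in> dbl_ideal"
  using dbl_ideal.add unfolding fa_add_app .

lemma dbl_ideal_smult: "f \<in> dbl_ideal \<Longrightarrow> (\<lambda>w. c * f w) \<in> dbl_ideal"
  using dbl_ideal.smult unfolding fa_smult_app .

lemma dbl_ideal_diff: "f \<in> dbl_ideal \<Longrightarrow> g \<in> dbl_ideal \<Longrightarrow> (\<lambda>w. f w - g w) \<in> dbl_ideal"
  using dbl_ideal_add[OF _ dbl_ideal_smult[of g "-1"]] by simp

lemma dbl_ideal_uminus: "f \<in> dbl_ideal \<Longrightarrow> (\<lambda>w. - f w) \<in> dbl_ideal"
  using dbl_ideal_smult[of f "-1"] by simp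

lemma dbl_ideal_mul_left: "f \<in> dbl_ideal \<Longrightarrow> fin_supp g \<Longrightarrow> fa_mul g f \<in> dbl_ideal"
  using dbl_ideal.mult_left fa_carrier_iff_fin_supp by blast

lemma dbl_ideal_mul_right: "f \<in> dbl_ideal \<Longrightarrow> fin_supp g \<Longrightarrow> fa_mul f g \<in> dbl_ideal"
  using dbl_ideal.mult_right fa_carrier_iff_fin_supp by blast

lemma dbl_rels_memI:
  "fa_diff (fa_word [Inl (a + b)]) (fa_add (fa_word [Inl a]) (fa_word [Inl b])) \<in> dbl_rels"
  "fa_diff (fa_word [Inl (cscale c a)]) (fa_smult c (fa_word [Inl a])) \<in> dbl_rels"
  "fa_diff (fa_word [Inl a, Inl b]) (fa_word [Inl (a * b)]) \<in> dbl_rels"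
  "fa_diff (fa_word [Inl 1]) fa_one \<in> dbl_rels"
  "fa_diff (fa_word [Inr (a + b)]) (fa_add (fa_word [Inr a]) (fa_word [Inr b])) \<in> dbl_rels"
  "fa_diff (fa_word [Inr (cscale c a)]) (fa_smult (cnj c) (fa_word [Inr a])) \<in> dbl_rels"
  "fa_diff (fa_word [Inr a, Inr b]) (fa_word [Inr (b * a)]) \<in> dbl_rels"
  "fa_diff (fa_word [Inr 1]) fa_one \<in> dbl_rels"
  unfolding dbl_rels_def by blast+

lemma fa_star_dbl_rels: assumes "r \<in> dbl_rels" shows "fa_star r \<in> dbl_rels"
  using assms[unfolded dbl_rels_def]
  apply (elim UnE CollectE exE conjE singletonE insertE)
  by (simp_all only: fa_star_ops fa_star_word word_star_simps complex_cnj_cnj dbl_rels_memI)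

lemma dbl_ideal_star: "f \<in> dbl_ideal \<Longrightarrow> fa_star f \<in> dbl_ideal"
proof (induction rule: dbl_ideal.induct)
  case (rel r) then show ?case by (simp add: dbl_ideal.rel fa_star_dbl_rels)
next
  case zero then show ?case by (simp add: fa_star_zero dbl_ideal.zero)
next
  case (add f g) then show ?case by (simp add: fa_add_app fa_star_add dbl_ideal_add)
next
  case (smult f c) then show ?case by (simp add: fa_smult_app fa_star_smult dbl_ideal_smult)
next
  case (mult_left f g) then show ?case
    by (simp add: fa_star_mul dbl_ideal_mul_right fin_supp_fa_star fa_carrier_iff_fin_supp)
next
  case (mult_right f g) then show ?case
    by (simp add: fa_star_mul dbl_ideal_mul_left fin_supp_fa_star fa_carrier_iff_fin_supp)
qed

lemma dbl_eq_iff_diff: "dbl_eq f g \<longleftrightarrow> (\<lambda>w. f w - g w) \<in> dbl_ideal"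
  unfolding dbl_eq_def fa_diff_app ..

lemma dbl_eq_refl: "dbl_eq f f" unfolding dbl_eq_iff_diff by (simp add: dbl_ideal.zero)

lemma dbl_eq_sym:
  "dbl_eq f g \<Longrightarrow> dbl_eq g f"
  unfolding dbl_eq_iff_diff using dbl_ideal_uminus by fastforce

lemma dbl_eq_trans [trans]: "dbl_eq f g \<Longrightarrow> dbl_eq g h \<Longrightarrow> dbl_eq f h"
  unfolding dbl_eq_iff_diff using dbl_ideal_add by fastforce

lemma eq_dbl_eq_trans [trans]: "f = g \<Longrightarrow> dbl_eq g h \<Longrightarrow> dbl_eq f h" by simp

lemma dbl_eq_eq_trans [trans]: "dbl_eq f g \<Longrightarrow> g = h \<Longrightarrow> dbl_eq f h" by simp

lemma dbl_eq_add: "dbl_eq f f' \<Longrightarrow> dbl_eq g g' \<Longrightarrow> dbl_eq (\<lambda>w. f w + g w) (\<lambda>w. f' w + g' w)"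
  unfolding dbl_eq_iff_diff by (drule (1) dbl_ideal_add) (simp add: algebra_simps)

lemma dbl_eq_smult: "dbl_eq f f' \<Longrightarrow> dbl_eq (\<lambda>w. c * f w) (\<lambda>w. c * f' w)"
  unfolding dbl_eq_iff_diff by (drule dbl_ideal_smult[where c=c]) (simp add: algebra_simps)

lemma dbl_eq_sum: "finite S \<Longrightarrow> (\<And>i. i \<in> S \<Longrightarrow> dbl_eq (f i) (g i)) \<Longrightarrow>
   dbl_eq (\<lambda>w. \<Sum>i\<in>S. f i w) (\<lambda>w. \<Sum>i\<in>S. g i w)"
  by (induction S rule: finite_induct) (auto intro: dbl_eq_add dbl_eq_refl)

lemma dbl_eq_mul_left: "fin_supp h \<Longrightarrow> dbl_eq f f' \<Longrightarrow> dbl_eq (fa_mul h f) (fa_mul h f')"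
  unfolding dbl_eq_iff_diff by (drule (1) dbl_ideal_mul_left) (simp add: fa_mul_diff_right)

lemma dbl_eq_mul_right: "fin_supp h \<Longrightarrow> dbl_eq f f' \<Longrightarrow> dbl_eq (fa_mul f h) (fa_mul f' h)"
  unfolding dbl_eq_iff_diff by (drule (1) dbl_ideal_mul_right) (simp add: fa_mul_diff_left)

lemma dbl_eq_star: "dbl_eq f g \<Longrightarrow> dbl_eq (fa_star f) (fa_star g)"
  unfolding dbl_eq_iff_diff by (drule dbl_ideal_star) (simp add: fa_star_diff)

lemma dbl_eq_lin_ext:
  "fin_supp e \<Longrightarrow> (\<And>v. e v \<noteq> 0 \<Longrightarrow> dbl_eq (F v) ((G v)::'a::cplx_unital_alg fa)) \<Longrightarrow>
   dbl_eq (lin_ext F e) (lin_ext G e)"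
  unfolding lin_ext_def fin_supp_def by (intro dbl_eq_sum dbl_eq_smult) auto

lemma dbl_eq_zero_if_trivial:
  assumes one: "(1::'a::cplx_unital_alg) = 0" and f: "fin_supp (f::'a fa)"
  shows "dbl_eq f (\<lambda>w. 0)"
proof -
  have "fa_diff (fa_word [Inl (0+0::'a)]) (fa_add (fa_word [Inl 0]) (fa_word [Inl 0])) \<in> dbl_ideal"
    by (rule dbl_ideal.rel[OF dbl_rels_memI(1)])
  then have "(\<lambda>w. - fa_word [Inl (0::'a)] w) \<in> dbl_ideal" by (simp add: fa_diff_app fa_add_app)
  then have z: "fa_word [Inl (0::'a)] \<in> dbl_ideal" using dbl_ideal_uminus by fastforce
  have "fa_diff (fa_word [Inl (1::'a)]) fa_one \<in> dbl_ideal"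
    by (rule dbl_ideal.rel[OF dbl_rels_memI(4)])
  then have "(\<lambda>w. fa_word [Inl (0::'a)] w - fa_one w) \<in> dbl_ideal" using one
    by (simp add: fa_diff_app)
  then have "(\<lambda>w. fa_word [Inl (0::'a)] w - (fa_word [Inl (0::'a)] w - fa_one w)) \<in> dbl_ideal"
    using dbl_ideal_diff[OF z] by blast
  then have o: "(fa_one::'a fa) \<in> dbl_ideal" by simp
  have "fa_mul fa_one f = f" unfolding fa_one_def fa_mul_fa_word_left word_shift_def by simp
  then have "f \<in> dbl_ideal" using dbl_ideal_mul_right[OF o f] by simp
  then show ?thesis unfolding dbl_eq_iff_diff by simp
qed

section \<open>A basis of the algebra containing the unit\<close>

interpretation alg: vector_space "cscale :: complex \<Rightarrow> 'a::cplx_unital_alg \<Rightarrow> 'a"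
  by unfold_locales (auto simp: cscale_add_right cscale_add_left cscale_cscale cscale_one)

definition alg_basis :: "'a::cplx_unital_alg set" where
  "alg_basis = alg.extend_basis {1}"

definition alg_coord :: "'a::cplx_unital_alg \<Rightarrow> 'a \<Rightarrow> complex" where
  "alg_coord x c = alg.representation alg_basis x c"

lemma alg_coord_nonzeroD: "alg_coord x c \<noteq> 0 \<Longrightarrow> c \<in> alg_basis"
  unfolding alg_coord_def by (rule alg.representation_ne_zero)

lemma finite_alg_coord_support: "finite {c. alg_coord x c \<noteq> 0}"
  unfolding alg_coord_def by (rule alg.finite_representation)

lemma alg_coord_zero: "alg_coord 0 c = 0"
  unfolding alg_coord_def by (simp add: alg.representation_zero)

context
  assumes nontriv: "(1::'a::cplx_unital_alg) \<noteq> 0"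
begin

lemma alg_basis_independent: "alg.independent (alg_basis :: 'a set)"
  unfolding alg_basis_def by (rule alg.independent_extend_basis) (simp add: nontriv)

lemma alg_basis_span: "alg.span (alg_basis :: 'a set) = UNIV"
  unfolding alg_basis_def by (rule alg.span_extend_basis) (simp add: nontriv)

lemma one_in_alg_basis: "(1::'a) \<in> alg_basis"
  unfolding alg_basis_def by (rule subsetD[OF alg.extend_basis_superset]) (simp_all add: nontriv)

lemma alg_coord_add: "alg_coord ((x::'a) + y) c = alg_coord x c + alg_coord y c"
  unfolding alg_coord_def by (simp add: alg.representation_add alg_basis_independent alg_basis_span)

lemma alg_coord_scale: "alg_coord (cscale r (x::'a)) c = r * alg_coord x c"
  unfolding alg_coord_def
  by (simp add: alg.representation_scale alg_basis_independent alg_basis_span)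

lemma alg_coord_basis: "(b::'a) \<in> alg_basis \<Longrightarrow> alg_coord b c = (if c = b then 1 else 0)"
  unfolding alg_coord_def by (simp add: alg.representation_basis alg_basis_independent)

lemma alg_coord_one: "alg_coord (1::'a) c = (if c = 1 then 1 else 0)"
  by (rule alg_coord_basis[OF one_in_alg_basis])

lemma alg_coord_sum_eq:
  assumes "finite S" "{c. alg_coord (x::'a) c \<noteq> 0} \<subseteq> S"
  shows "(\<Sum>c\<in>S. cscale (alg_coord x c) c) = x"
proof -
  have "(\<Sum>c\<in>S. cscale (alg_coord x c) c) = (\<Sum>c | alg_coord x c \<noteq> 0. cscale (alg_coord x c) c)"
    by (rule sum.mono_neutral_right) (use assms in \<open>auto simp: alg.scale_eq_0_iff\<close>)
  also have "\<dots> = x"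
    unfolding alg_coord_def
    by (rule alg.sum_nonzero_representation_eq) (simp_all add: alg_basis_independent alg_basis_span)
  finally show ?thesis .
qed

end

section \<open>Reduced words\<close>

text \<open>On the \<open>A\<^sup>*\<close>
  side scalars act through \<open>cnj\<close> and products are reversed; \<open>side_scale\<close> and \<open>side_mult\<close>
  treat both sides uniformly.\<close>

fun gen :: "bool \<Rightarrow> 'a \<Rightarrow> 'a + 'a" where
  "gen True c = Inl c"
| "gen False c = Inr c"

fun gen_elem :: "'a + 'a \<Rightarrow> 'a" where
  "gen_elem (Inl a) = a"
| "gen_elem (Inr a) = a"

definition side_scale :: "bool \<Rightarrow> complex \<Rightarrow> complex" where
  "side_scale s z = (if s then z else cnj z)"

definition side_mult :: "bool \<Rightarrow> 'a::cplx_unital_alg \<Rightarrow> 'a \<Rightarrow> 'a" where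
  "side_mult s a b = (if s then a * b else b * a)"

lemma isl_gen [simp]: "isl (gen s c) = s"
  by (cases s) auto

lemma gen_elem_gen [simp]: "gen_elem (gen s c) = c"
  by (cases s) auto

lemma gen_isl_gen_elem: "gen (isl g) (gen_elem g) = g"
  by (cases g) auto

lemma eq_gen_iff: "g = gen s c \<longleftrightarrow> isl g = s \<and> gen_elem g = c"
  by (cases g; cases s) auto

lemma isl_swap_gen [simp]: "isl (swap_gen g) = (\<not> isl g)"
  by (cases g) auto

lemma gen_elem_swap_gen [simp]: "gen_elem (swap_gen g) = gen_elem g"
  by (cases g) auto

lemma side_scale_add: "side_scale s (a + b) = side_scale s a + side_scale s b"
  unfolding side_scale_def by auto

lemma side_scale_mult: "side_scale s (a * b) = side_scale s a * side_scale s b"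
  unfolding side_scale_def by auto

lemma side_scale_zero [simp]: "side_scale s 0 = 0"
  unfolding side_scale_def by auto

lemma side_scale_one [simp]: "side_scale s 1 = 1"
  unfolding side_scale_def by auto

lemma side_mult_assoc:
  "side_mult s (side_mult s a b) (c::'a::cplx_unital_alg) = side_mult s a (side_mult s b c)"
  unfolding side_mult_def by (simp add: mult.assoc)

lemma side_mult_one_left [simp]: "side_mult s 1 (a::'a::cplx_unital_alg) = a"
  unfolding side_mult_def by simp

lemma side_mult_add_left:
  "side_mult s (a + b) (c::'a::cplx_unital_alg) = side_mult s a c + side_mult s b c"
  unfolding side_mult_def by (simp add: distrib_left distrib_right)

lemma side_mult_scale_left:
  "side_mult s (cscale r a) (c::'a::cplx_unital_alg) = cscale r (side_mult s a c)"
  unfolding side_mult_def by (simp add: cscale_mult_left cscale_mult_right)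

definition nonunit_basis :: "'a::cplx_unital_alg set" where
  "nonunit_basis = alg_basis - {1}"

definition reduced :: "('a::cplx_unital_alg + 'a) list \<Rightarrow> bool" where
  "reduced w \<longleftrightarrow> (\<forall>g\<in>set w. gen_elem g \<in> nonunit_basis) \<and> successively (\<lambda>g h. isl g \<noteq> isl h) w"

definition may_follow :: "bool \<Rightarrow> ('a + 'a) list \<Rightarrow> bool" where
  "may_follow s t \<longleftrightarrow> (case t of [] \<Rightarrow> True | h # _ \<Rightarrow> isl h \<noteq> s)"

lemma reduced_Nil [simp]: "reduced []"
  unfolding reduced_def by simp

lemma reduced_Cons:
  "reduced (g # t) \<longleftrightarrow> gen_elem g \<in> nonunit_basis \<and> may_follow (isl g) t \<and> reduced t"
  unfolding reduced_def may_follow_def by (cases t) (auto simp: successively_Cons)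

lemma reduced_append:
  "reduced u \<Longrightarrow> reduced v \<Longrightarrow> u = [] \<or> v = [] \<or> isl (last u) \<noteq> isl (hd v) \<Longrightarrow> reduced (u @ v)"
  unfolding reduced_def by (auto simp: successively_append_iff)

lemma reduced_word_star: "reduced w \<Longrightarrow> reduced (word_star w)"
  unfolding reduced_def word_star_def by (auto simp: successively_map elim: successively_mono)

lemma last_word_star: "u \<noteq> [] \<Longrightarrow> last (word_star u) = swap_gen (hd u)"
  unfolding word_star_def by (cases u) auto

lemma hd_word_star: "u \<noteq> [] \<Longrightarrow> hd (word_star u) = swap_gen (last u)"
  unfolding word_star_def by (simp add: hd_rev last_map)

lemma reduced_append_word_star: "reduced u \<Longrightarrow> reduced (u @ word_star u)"
  by (rule reduced_append) (auto simp: reduced_word_star hd_word_star)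

lemma reduced_word_star_append: "reduced u \<Longrightarrow> reduced (word_star u @ u)"
  by (rule reduced_append) (auto simp: reduced_word_star last_word_star)

section \<open>Normal forms\<close>

text \<open>For \<open>t\<close> reduced and not starting on side \<open>s\<close>, \<open>gen_nf s x t\<close> is the normal form of
  the word \<open>gen s x # t\<close>: expand \<open>x\<close> in \<open>alg_basis\<close>, where the unit coordinate drops the
  letter. \<open>cons_nf g w\<close> is the normal form of \<open>g # w\<close> for reduced \<open>w\<close>, multiplying \<open>g\<close> into
  the first letter of \<open>w\<close> if both lie on the same side. Linear extension gives the action
  \<open>fa_op\<close> of the free algebra on coefficient functions of reduced words, and \<open>nf f\<close> is the
  action of \<open>f\<close> on the unit.\<close>

definition gen_nf :: "bool \<Rightarrow> 'a::cplx_unital_alg \<Rightarrow> ('a + 'a) list \<Rightarrow> 'a fa" where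
  "gen_nf s x t = (\<lambda>w. (if w = t then side_scale s (alg_coord x 1) else 0) +
     (case w of [] \<Rightarrow> 0 | g # t' \<Rightarrow>
        if t' = t \<and> isl g = s \<and> gen_elem g \<noteq> 1 then side_scale s (alg_coord x (gen_elem g)) else 0))"

definition cons_nf :: "'a::cplx_unital_alg + 'a \<Rightarrow> ('a + 'a) list \<Rightarrow> 'a fa" where
  "cons_nf g w = (case w of [] \<Rightarrow> gen_nf (isl g) (gen_elem g) []
     | h # t \<Rightarrow> if isl h = isl g then gen_nf (isl g) (side_mult (isl g) (gen_elem g) (gen_elem h)) t
               else gen_nf (isl g) (gen_elem g) w)"

definition gen_op :: "'a::cplx_unital_alg + 'a \<Rightarrow> 'a fa \<Rightarrow> 'a fa" where
  "gen_op g = lin_ext (cons_nf g)"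

definition normal :: "'a::cplx_unital_alg fa \<Rightarrow> bool" where
  "normal d \<longleftrightarrow> fin_supp d \<and> (\<forall>w. d w \<noteq> 0 \<longrightarrow> reduced w)"

fun word_op :: "('a::cplx_unital_alg + 'a) list \<Rightarrow> 'a fa \<Rightarrow> 'a fa" where
  "word_op [] d = d"
| "word_op (g # u) d = gen_op g (word_op u d)"

definition fa_op :: "'a::cplx_unital_alg fa \<Rightarrow> 'a fa \<Rightarrow> 'a fa" where
  "fa_op f d = lin_ext (\<lambda>u. word_op u d) f"

definition nf :: "'a::cplx_unital_alg fa \<Rightarrow> 'a fa" where
  "nf f = fa_op f (fa_word [])"

lemma fin_supp_gen_nf: "fin_supp (gen_nf s x t)"
proof -
  have "{w. gen_nf s x t w \<noteq> 0} \<subseteq> insert t ((\<lambda>c. gen s c # t) ` {c. alg_coord x c \<noteq> 0})"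
  proof
    fix w assume "w \<in> {w. gen_nf s x t w \<noteq> 0}"
    then show "w \<in> insert t ((\<lambda>c. gen s c # t) ` {c. alg_coord x c \<noteq> 0})"
      unfolding gen_nf_def
      by (cases w) (auto split: if_splits simp: image_iff eq_gen_iff side_scale_def)
  qed
  then show ?thesis unfolding fin_supp_def
    by (rule finite_subset) (simp add: finite_alg_coord_support)
qed

lemma reduced_gen_nf: "reduced t \<Longrightarrow> may_follow s t \<Longrightarrow> gen_nf s x t w \<noteq> 0 \<Longrightarrow> reduced w"
  unfolding gen_nf_def
  by (cases w)
    (auto split: if_splits simp: reduced_Cons nonunit_basis_def alg_coord_nonzeroD side_scale_def)

lemma length_gen_nf: "gen_nf s x t w \<noteq> 0 \<Longrightarrow> length w \<le> Suc (length t)"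
  unfolding gen_nf_def by (cases w) (auto split: if_splits)

lemma fin_supp_cons_nf: "fin_supp (cons_nf g w)"
  unfolding cons_nf_def by (cases w) (auto intro: fin_supp_gen_nf)

lemma reduced_cons_nf: assumes "reduced w" "cons_nf g w w' \<noteq> 0" shows "reduced w'"
proof (cases w)
  case Nil 
  have "gen_nf (isl g) (gen_elem g) [] w' \<noteq> 0" using assms(2) unfolding cons_nf_def Nil by simp
  then show ?thesis by (rule reduced_gen_nf[rotated 2]) (auto simp: may_follow_def)
next
  case (Cons h t)
  have t: "reduced t" "may_follow (isl h) t" using assms(1) unfolding Cons reduced_Cons by auto
  show ?thesis
  proof (cases "isl h = isl g")
    case True 
    have "gen_nf (isl g) (side_mult (isl g) (gen_elem g) (gen_elem h)) t w' \<noteq> 0"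
      using assms(2) True unfolding cons_nf_def Cons by simp
    then show ?thesis by (rule reduced_gen_nf[rotated 2]) (use t True in auto)
  next
    case False
    then have n: "may_follow (isl g) (h # t)" unfolding may_follow_def by simp
    have "gen_nf (isl g) (gen_elem g) (h # t) w' \<noteq> 0"
      using assms(2) False unfolding cons_nf_def Cons by simp
    then show ?thesis by (rule reduced_gen_nf[rotated 2]) (use n assms(1) Cons in auto)
  qed
qed

lemma length_cons_nf: "cons_nf g w w' \<noteq> 0 \<Longrightarrow> length w' \<le> Suc (length w)"
  unfolding cons_nf_def
  by (cases w) (auto split: if_splits dest: length_gen_nf)

lemma gen_nf_zero: "gen_nf s (0::'a::cplx_unital_alg) t w = 0"
  unfolding gen_nf_def by (cases w) (auto simp: alg_coord_zero)

lemma normal_cons_nf: "reduced w \<Longrightarrow> normal (cons_nf g w)"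
  unfolding normal_def by (auto intro: fin_supp_cons_nf reduced_cons_nf)

lemma normal_fin_supp: "normal d \<Longrightarrow> fin_supp d" unfolding normal_def by simp

lemma normal_reduced: "normal d \<Longrightarrow> d w \<noteq> 0 \<Longrightarrow> reduced w" unfolding normal_def by simp

lemma normal_lin_ext: "fin_supp d \<Longrightarrow> (\<And>w. d w \<noteq> 0 \<Longrightarrow> normal (G w)) \<Longrightarrow> normal (lin_ext G d)"
  unfolding normal_def by (auto intro!: fin_supp_lin_ext dest!: lin_ext_nonzeroD)

lemma normal_gen_op: assumes "normal d" shows "normal (gen_op g d)"
proof -
  have "fin_supp (gen_op g d)" unfolding gen_op_def using assms unfolding normal_def
    by (auto intro!: fin_supp_lin_ext fin_supp_cons_nf)
  moreover have "reduced w'" if nz: "gen_op g d w' \<noteq> 0" for w'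
  proof -
    obtain w where "d w \<noteq> 0" "cons_nf g w w' \<noteq> 0" using lin_ext_nonzeroD[OF nz[unfolded gen_op_def]]
      by blast
    then show ?thesis using assms reduced_cons_nf unfolding normal_def by blast
  qed
  ultimately show ?thesis unfolding normal_def by blast
qed

lemma normal_fa_word: "reduced u \<Longrightarrow> normal (fa_word (u::('a::cplx_unital_alg+'a) list))"
  unfolding normal_def using fin_supp_fa_word[of u] by (auto simp: fa_word_app)

lemma normal_fa_star: "normal d \<Longrightarrow> normal (fa_star d)"
  unfolding normal_def
  by (auto simp: fin_supp_fa_star fa_star_app) (metis reduced_word_star word_star_word_star)

lemma gen_op_zero: "gen_op g (\<lambda>w. 0) = (\<lambda>w. 0)"
  unfolding gen_op_def by (rule ext, rule lin_ext_zero)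

lemma gen_op_lin_ext:
  "fin_supp d \<Longrightarrow> (\<And>w. d w \<noteq> 0 \<Longrightarrow> normal (G w)) \<Longrightarrow>
   gen_op g (lin_ext G d) = lin_ext (\<lambda>w. gen_op g (G w)) d"
  unfolding gen_op_def by (rule ext, rule lin_ext_lin_ext) (auto dest: normal_fin_supp)

lemma normal_word_op: "normal d \<Longrightarrow> normal (word_op u d)"
  by (induction u) (auto intro: normal_gen_op)

lemma word_op_append: "word_op (u @ v) d = word_op u (word_op v d)"
  by (induction u) auto

lemma word_op_zero: "word_op u (\<lambda>w. 0) = (\<lambda>w. 0)"
  by (induction u) (auto simp: gen_op_zero)

lemma word_op_lin_ext:
  "fin_supp d \<Longrightarrow> (\<And>w. d w \<noteq> 0 \<Longrightarrow> normal (G w)) \<Longrightarrow>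
   word_op u (lin_ext G d) = lin_ext (\<lambda>w. word_op u (G w)) d"
proof (induction u)
  case Nil then show ?case by simp
next
  case (Cons g u)
  have "word_op (g # u) (lin_ext G d) = gen_op g (lin_ext (\<lambda>w. word_op u (G w)) d)" using Cons
    by simp
  also have "\<dots> = lin_ext (\<lambda>w. gen_op g (word_op u (G w))) d"
    by (rule gen_op_lin_ext) (use Cons in \<open>auto intro: normal_word_op\<close>)
  finally show ?case by simp
qed

lemma normal_fa_op: "fin_supp f \<Longrightarrow> normal d \<Longrightarrow> normal (fa_op f d)"
  unfolding fa_op_def by (rule normal_lin_ext) (auto intro: normal_word_op)

lemma fa_op_fa_word: "fa_op (fa_word u) d = word_op u d"
  unfolding fa_op_def fa_word_def by (rule ext, subst lin_ext_delta) simp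

lemma fa_op_single: "fa_op (fa_word [g]) d = gen_op g d" by (simp add: fa_op_fa_word)

lemma fa_op_double: "fa_op (fa_word [g, h]) d = gen_op g (gen_op h d)" by (simp add: fa_op_fa_word)

lemma fa_op_add:
  "fin_supp f \<Longrightarrow> fin_supp g \<Longrightarrow> fa_op (\<lambda>w. f w + g w) d = (\<lambda>w'. fa_op f d w' + fa_op g d w')"
  unfolding fa_op_def by (rule ext, rule lin_ext_add)

lemma fa_op_diff:
  "fin_supp f \<Longrightarrow> fin_supp g \<Longrightarrow> fa_op (\<lambda>w. f w - g w) d = (\<lambda>w'. fa_op f d w' - fa_op g d w')"
  unfolding fa_op_def by (rule ext, rule lin_ext_diff)

lemma fa_op_smult: "fin_supp f \<Longrightarrow> fa_op (\<lambda>w. c * f w) d = (\<lambda>w'. c * fa_op f d w')"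
  unfolding fa_op_def by (rule ext, rule lin_ext_smult)

lemma fa_op_zero: "fa_op (\<lambda>w. 0) d = (\<lambda>w. 0)"
  unfolding fa_op_def by (rule ext, rule lin_ext_zero)

lemma fa_op_zero_right: "fa_op f (\<lambda>w. 0) = (\<lambda>w. 0)"
  unfolding fa_op_def by (rule ext) (simp add: word_op_zero lin_ext_def)

lemma fin_supp_fa_ops:
  "fin_supp f \<Longrightarrow> fin_supp g \<Longrightarrow> fin_supp (fa_diff f g)"
  "fin_supp f \<Longrightarrow> fin_supp g \<Longrightarrow> fin_supp (fa_add f g)"
  "fin_supp f \<Longrightarrow> fin_supp (fa_smult c f)" "fin_supp fa_one"
  unfolding fa_diff_app fa_add_app fa_smult_app
  by (auto intro: fin_supp_diff fin_supp_add fin_supp_smult fin_supp_fa_one)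

lemma fa_op_ops: "fin_supp f \<Longrightarrow> fin_supp g \<Longrightarrow> fa_op (fa_diff f g) d = (\<lambda>w. fa_op f d w - fa_op g d w)"
  "fin_supp f \<Longrightarrow> fin_supp g \<Longrightarrow> fa_op (fa_add f g) d = (\<lambda>w. fa_op f d w + fa_op g d w)"
  "fin_supp f \<Longrightarrow> fa_op (fa_smult c f) d = (\<lambda>w. c * fa_op f d w)"
  "fa_op fa_one d = d"
  unfolding fa_diff_app fa_add_app fa_smult_app fa_one_def
  by (auto simp: fa_op_diff fa_op_add fa_op_smult fa_op_fa_word)

lemma fa_op_lin_ext:
  "fin_supp f \<Longrightarrow> (\<And>w. f w \<noteq> 0 \<Longrightarrow> fin_supp (H w)) \<Longrightarrow>
   fa_op (lin_ext H f) d = lin_ext (\<lambda>w. fa_op (H w) d) f"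
  unfolding fa_op_def by (rule ext, rule lin_ext_lin_ext)

lemma fa_op_mul_fa_word:
  "fin_supp g \<Longrightarrow> normal d \<Longrightarrow> fa_op (fa_mul (fa_word u) g) d = word_op u (fa_op g d)"
proof -
  assume g: "fin_supp g" and d: "normal d"
  have "fa_op (fa_mul (fa_word u) g) d = fa_op (lin_ext (\<lambda>v. fa_word (u @ v)) g) d"
    by (simp add: fa_mul_fa_word_left word_shift_lin_ext[OF g])
  also have "\<dots> = lin_ext (\<lambda>v. fa_op (fa_word (u @ v)) d) g"
    by (rule fa_op_lin_ext[OF g]) (rule fin_supp_fa_word)
  also have "\<dots> = lin_ext (\<lambda>v. word_op u (word_op v d)) g"
    by (simp add: fa_op_fa_word word_op_append)
  also have "\<dots> = word_op u (fa_op g d)"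
    unfolding fa_op_def by (rule word_op_lin_ext[symmetric, OF g])
      (use d in \<open>auto intro: normal_word_op\<close>)
  finally show ?thesis .
qed

lemma fa_op_mul: "fin_supp f \<Longrightarrow> fin_supp g \<Longrightarrow> normal d \<Longrightarrow> fa_op (fa_mul f g) d = fa_op f (fa_op g d)"
proof -
  assume f: "fin_supp f" and g: "fin_supp g" and d: "normal d"
  have "fa_op (fa_mul f g) d = fa_op (lin_ext (\<lambda>u. fa_mul (fa_word u) g) f) d"
    by (simp add: fa_mul_lin_ext_left[OF f])
  also have "\<dots> = lin_ext (\<lambda>u. fa_op (fa_mul (fa_word u) g) d) f"
    by (rule fa_op_lin_ext[OF f]) (intro fin_supp_fa_mul fin_supp_fa_word g)
  also have "\<dots> = lin_ext (\<lambda>u. word_op u (fa_op g d)) f"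
    by (simp add: fa_op_mul_fa_word[OF g d])
  also have "\<dots> = fa_op f (fa_op g d)" unfolding fa_op_def ..
  finally show ?thesis .
qed

lemma normal_nf: "fin_supp f \<Longrightarrow> normal (nf (f::'a::cplx_unital_alg fa))"
  unfolding nf_def by (rule normal_fa_op) (auto intro: normal_fa_word)

lemma nf_diff:
  "fin_supp f \<Longrightarrow> fin_supp g \<Longrightarrow> nf (\<lambda>w. f w - g w) = (\<lambda>w. nf f w - nf (g::'a::cplx_unital_alg fa) w)"
  unfolding nf_def by (rule fa_op_diff)

lemma nf_sum: "finite I \<Longrightarrow> (\<And>i. i \<in> I \<Longrightarrow> fin_supp (f i)) \<Longrightarrow>
   nf (\<lambda>w. \<Sum>i\<in>I. (f i::'a::cplx_unital_alg fa) w) = (\<lambda>w. \<Sum>i\<in>I. nf (f i) w)"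
  unfolding nf_def fa_op_def by (rule ext, rule lin_ext_sum)

lemma nf_smult: "fin_supp y \<Longrightarrow> nf (fa_smult l y) = (\<lambda>w. l * nf (y::'a::cplx_unital_alg fa) w)"
  unfolding nf_def fa_smult_app by (rule fa_op_smult)

lemma nf_zero: "nf (\<lambda>w. 0) = (\<lambda>w. 0)" unfolding nf_def by (rule fa_op_zero)

lemma nf_fa_mul_left:
  "fin_supp f \<Longrightarrow> fin_supp g \<Longrightarrow> nf (fa_mul f g) = fa_op f (nf (g::'a::cplx_unital_alg fa))"
  unfolding nf_def by (rule fa_op_mul) (auto intro: normal_fa_word)

section \<open>Normal forms decide equality in the double\<close>

lemma dbl_eq_gen_add:
  "dbl_eq (fa_word [gen s ((a::'a::cplx_unital_alg) + b)])
     (\<lambda>w. fa_word [gen s a] w + fa_word [gen s b] w)"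
  unfolding dbl_eq_def using dbl_ideal.rel[OF dbl_rels_memI(1)] dbl_ideal.rel[OF dbl_rels_memI(5)]
  by (cases s) (simp_all add: fa_add_app)

lemma dbl_eq_gen_scale:
  "dbl_eq (fa_word [gen s (cscale c (a::'a::cplx_unital_alg))])
     (\<lambda>w. side_scale s c * fa_word [gen s a] w)"
  unfolding dbl_eq_def using dbl_ideal.rel[OF dbl_rels_memI(2)] dbl_ideal.rel[OF dbl_rels_memI(6)]
  by (cases s) (simp_all add: fa_smult_app side_scale_def)

lemma dbl_eq_gen_mult:
  "dbl_eq (fa_word [gen s (a::'a::cplx_unital_alg), gen s b]) (fa_word [gen s (side_mult s a b)])"
  unfolding dbl_eq_def using dbl_ideal.rel[OF dbl_rels_memI(3)] dbl_ideal.rel[OF dbl_rels_memI(7)]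
  by (cases s) (simp_all add: side_mult_def)

lemma dbl_eq_gen_one: "dbl_eq (fa_word [gen s (1::'a::cplx_unital_alg)]) (fa_word [])"
  unfolding dbl_eq_def using dbl_ideal.rel[OF dbl_rels_memI(4)] dbl_ideal.rel[OF dbl_rels_memI(8)]
  by (cases s) (simp_all add: fa_one_def)

lemma dbl_eq_gen_zero: "dbl_eq (fa_word [gen s (0::'a::cplx_unital_alg)]) (\<lambda>w. 0)"
proof -
  have "(\<lambda>w. fa_word [gen s (0::'a)] w - (fa_word [gen s 0] w + fa_word [gen s 0] w)) \<in> dbl_ideal"
    using dbl_eq_gen_add[of s 0 0] unfolding dbl_eq_iff_diff by simp
  then have "(\<lambda>w. - fa_word [gen s (0::'a)] w - 0) \<in> dbl_ideal" by (simp add: algebra_simps)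
  then have "(\<lambda>w. - (- fa_word [gen s (0::'a)] w - 0)) \<in> dbl_ideal" by (rule dbl_ideal_uminus)
  then show ?thesis unfolding dbl_eq_iff_diff by simp
qed

lemma dbl_eq_gen_sum:
  "finite F \<Longrightarrow>
   dbl_eq (fa_word [gen s (\<Sum>c\<in>F. (y c::'a::cplx_unital_alg))]) (\<lambda>w. \<Sum>c\<in>F. fa_word [gen s (y c)] w)"
proof (induction F rule: finite_induct)
  case empty then show ?case by (simp add: dbl_eq_gen_zero)
next
  case (insert c F)
  have "dbl_eq (fa_word [gen s (\<Sum>c\<in>insert c F. y c)]) (fa_word [gen s (y c + (\<Sum>c\<in>F. y c))])"
    using insert by (simp add: dbl_eq_refl)
  also have "dbl_eq \<dots> (\<lambda>w. fa_word [gen s (y c)] w + fa_word [gen s (\<Sum>c\<in>F. y c)] w)"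
    by (rule dbl_eq_gen_add)
  also have "dbl_eq \<dots> (\<lambda>w. fa_word [gen s (y c)] w + (\<Sum>c\<in>F. fa_word [gen s (y c)] w))"
    by (rule dbl_eq_add[OF dbl_eq_refl insert.IH])
  finally show ?case using insert by simp
qed

context
  assumes nontriv: "(1::'a::cplx_unital_alg) \<noteq> 0"
begin

lemma gen_nf_add: "gen_nf s ((x::'a) + y) t w = gen_nf s x t w + gen_nf s y t w"
  unfolding gen_nf_def by (cases w) (auto simp: alg_coord_add[OF nontriv] side_scale_add)

lemma gen_nf_scale: "gen_nf s (cscale r (x::'a)) t w = side_scale s r * gen_nf s x t w"
  unfolding gen_nf_def
  by (cases w) (auto simp: alg_coord_scale[OF nontriv] side_scale_mult distrib_left)

lemma gen_nf_sum: "finite I \<Longrightarrow> gen_nf s (\<Sum>i\<in>I. (f i::'a)) t w = (\<Sum>i\<in>I. gen_nf s (f i) t w)"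
  by (induction I rule: finite_induct) (auto simp: gen_nf_zero gen_nf_add)

lemma gen_nf_basis: "(c::'a) \<in> nonunit_basis \<Longrightarrow> gen_nf s c t = fa_word (gen s c # t)"
proof
  fix w assume c: "c \<in> nonunit_basis"
  show "gen_nf s c t w = fa_word (gen s c # t) w"
    unfolding gen_nf_def fa_word_app using c
    by (cases w) (auto simp: alg_coord_basis[OF nontriv] nonunit_basis_def eq_gen_iff)
qed

lemma gen_nf_one: "gen_nf s (1::'a) t = fa_word t"
proof
  fix w show "gen_nf s (1::'a) t w = fa_word t w"
    unfolding gen_nf_def fa_word_app
    by (cases w) (auto simp: alg_coord_one[OF nontriv])
qed

lemma gen_nf_eq_sum:
  fixes x :: 'a
  defines "S \<equiv> {c. alg_coord x c \<noteq> 0} - {1}"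
  shows "gen_nf s x t = (\<lambda>w. side_scale s (alg_coord x 1) * fa_word t w +
    (\<Sum>c\<in>S. side_scale s (alg_coord x c) * fa_word (gen s c # t) w))"
proof
  fix w
  have fS: "finite S" unfolding S_def using finite_alg_coord_support by auto
  have "(\<Sum>c\<in>S. side_scale s (alg_coord x c) * fa_word (gen s c # t) w) =
        (case w of [] \<Rightarrow> 0 | g # t' \<Rightarrow>
          if t' = t \<and> isl g = s \<and> gen_elem g \<noteq> 1 then side_scale s (alg_coord x (gen_elem g)) else 0)"
  proof (cases w)
    case Nil then show ?thesis by (simp add: fa_word_app)
  next
    case (Cons g t')
    have "(\<Sum>c\<in>S. side_scale s (alg_coord x c) * fa_word (gen s c # t) w) =
          (\<Sum>c\<in>S. if c = gen_elem g
            then (if t' = t \<and> isl g = s then side_scale s (alg_coord x c) else 0) else 0)"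
      by (rule sum.cong) (auto simp: fa_word_app Cons eq_gen_iff)
    also have "\<dots> = (if gen_elem g \<in> S
        then (if t' = t \<and> isl g = s then side_scale s (alg_coord x (gen_elem g)) else 0) else 0)"
      by (rule sum.delta[OF fS])
    also have "\<dots> =
        (if t' = t \<and> isl g = s \<and> gen_elem g \<noteq> 1 then side_scale s (alg_coord x (gen_elem g)) else 0)"
      by (auto simp: S_def)
    finally show ?thesis by (simp add: Cons)
  qed
  then show "gen_nf s x t w = side_scale s (alg_coord x 1) * fa_word t w +
      (\<Sum>c\<in>S. side_scale s (alg_coord x c) * fa_word (gen s c # t) w)"
    unfolding gen_nf_def by (simp add: fa_word_app)
qed

lemma side_mult_eq_alg_coord_sum:
  fixes a x :: 'a
  defines "S \<equiv> {c. alg_coord x c \<noteq> 0} - {1}"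
  shows "side_mult s a x = cscale (alg_coord x 1) a + (\<Sum>c\<in>S. cscale (alg_coord x c) (side_mult s a c))"
proof -
  have S: "finite S" unfolding S_def using finite_alg_coord_support by auto
  have "x = (\<Sum>c\<in>insert 1 S. cscale (alg_coord x c) c)"
    by (rule alg_coord_sum_eq[OF nontriv, symmetric]) (auto simp: S S_def finite_alg_coord_support)
  also have "\<dots> = cscale (alg_coord x 1) 1 + (\<Sum>c\<in>S. cscale (alg_coord x c) c)"
    by (rule sum.insert[OF S]) (simp add: S_def)
  finally have "side_mult s a x =
      side_mult s a (cscale (alg_coord x 1) 1 + (\<Sum>c\<in>S. cscale (alg_coord x c) c))"
    by simp
  also have "\<dots> = cscale (alg_coord x 1) a + (\<Sum>c\<in>S. cscale (alg_coord x c) (side_mult s a c))"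
    unfolding side_mult_def
    by (simp add: distrib_left distrib_right sum_distrib_left sum_distrib_right
        cscale_mult_left cscale_mult_right)
  finally show ?thesis .
qed

lemma gen_op_gen_nf:
  fixes a x :: 'a
  assumes t: "reduced t" "may_follow s t"
  shows "gen_op (gen s a) (gen_nf s x t) = gen_nf s (side_mult s a x) t"
proof
  fix w'
  define S where "S \<equiv> {c. alg_coord x c \<noteq> 0} - {1}"
  have fS: "finite S" unfolding S_def using finite_alg_coord_support by auto
  have e: "gen_nf s x t = (\<lambda>w. side_scale s (alg_coord x 1) * fa_word t w +
      (\<Sum>c\<in>S. side_scale s (alg_coord x c) * fa_word (gen s c # t) w))"
    unfolding S_def by (rule gen_nf_eq_sum)
  have cons_nf_head: "cons_nf (gen s a) t = gen_nf s a t"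
    using t unfolding cons_nf_def may_follow_def by (cases t) auto
  have cons_nf_same_side: "cons_nf (gen s a) (gen s c # t) = gen_nf s (side_mult s a c) t" for c
    unfolding cons_nf_def by simp
  have "gen_op (gen s a) (gen_nf s x t) w' =
        lin_ext (cons_nf (gen s a)) (\<lambda>w. side_scale s (alg_coord x 1) * fa_word t w) w' +
        lin_ext (cons_nf (gen s a))
          (\<lambda>w. \<Sum>c\<in>S. side_scale s (alg_coord x c) * fa_word (gen s c # t) w) w'"
    unfolding gen_op_def e
    by (rule lin_ext_add) (auto intro!: fin_supp_smult fin_supp_fa_word fin_supp_sum fS)
  also have "\<dots> = side_scale s (alg_coord x 1) * gen_nf s a t w' +
       (\<Sum>c\<in>S. side_scale s (alg_coord x c) * gen_nf s (side_mult s a c) t w')"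
    apply (subst lin_ext_smult, rule fin_supp_fa_word)
    apply (subst lin_ext_sum[OF fS], rule fin_supp_smult, rule fin_supp_fa_word)
    apply (subst lin_ext_smult, rule fin_supp_fa_word)
    apply (simp add: fa_word_def lin_ext_delta cons_nf_head cons_nf_same_side)
    done
  also have "\<dots> =
      gen_nf s (cscale (alg_coord x 1) a + (\<Sum>c\<in>S. cscale (alg_coord x c) (side_mult s a c))) t w'"
    by (simp add: gen_nf_add gen_nf_sum[OF fS] gen_nf_scale)
  also have "cscale (alg_coord x 1) a + (\<Sum>c\<in>S. cscale (alg_coord x c) (side_mult s a c)) =
      side_mult s a x"
    unfolding S_def by (rule side_mult_eq_alg_coord_sum[symmetric])
  finally show "gen_op (gen s a) (gen_nf s x t) w' = gen_nf s (side_mult s a x) t w'" .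
qed

lemma cons_nf_reduced: "reduced ((g::'a+'a) # w) \<Longrightarrow> cons_nf g w = fa_word (g # w)"
  unfolding cons_nf_def
  by (cases w) (auto simp: reduced_Cons may_follow_def gen_nf_basis gen_isl_gen_elem)

lemma cons_nf_add:
  "cons_nf (gen s ((a::'a) + b)) w w' = cons_nf (gen s a) w w' + cons_nf (gen s b) w w'"
  unfolding cons_nf_def by (cases w) (auto simp: gen_nf_add side_mult_add_left)

lemma cons_nf_scale:
  "cons_nf (gen s (cscale c (a::'a))) w w' = side_scale s c * cons_nf (gen s a) w w'"
  unfolding cons_nf_def by (cases w) (auto simp: gen_nf_scale side_mult_scale_left)

lemma cons_nf_one: assumes "reduced w" shows "cons_nf (gen s (1::'a)) w = fa_word w"
proof (cases w)
  case Nil then show ?thesis unfolding cons_nf_def by (simp add: gen_nf_one)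
next
  case (Cons h t)
  show ?thesis
  proof (cases "isl h = s")
    case True
    have "gen_elem h \<in> nonunit_basis" using assms Cons by (simp add: reduced_Cons)
    then have "gen_nf s (gen_elem h) t = fa_word (gen s (gen_elem h) # t)" by (rule gen_nf_basis)
    also have "gen s (gen_elem h) = h" using True gen_isl_gen_elem[of h] by simp
    finally show ?thesis using True unfolding cons_nf_def Cons by (simp add: side_mult_one_left)
  next
    case False then show ?thesis unfolding cons_nf_def Cons by (simp add: gen_nf_one)
  qed
qed

lemma gen_op_cons_nf:
  "reduced w \<Longrightarrow> gen_op (gen s (a::'a)) (cons_nf (gen s b) w) = cons_nf (gen s (side_mult s a b)) w"
proof (cases w)
  case Nil
  assume "reduced w"
  then show ?thesis unfolding cons_nf_def Nil
    by (simp add: gen_op_gen_nf may_follow_def)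
next
  case (Cons h t)
  assume r: "reduced w"
  then have t: "reduced t" "may_follow (isl h) t" using Cons by (auto simp: reduced_Cons)
  show ?thesis
  proof (cases "isl h = s")
    case True
    then show ?thesis unfolding Cons cons_nf_def
      using t by (simp add: gen_op_gen_nf side_mult_assoc)
  next
    case False
    have "may_follow s (h # t)" using False unfolding may_follow_def by simp
    then show ?thesis unfolding Cons cons_nf_def
      using r False Cons by (simp add: gen_op_gen_nf)
  qed
qed

lemma gen_op_add:
  "gen_op (gen s ((a::'a) + b)) d = (\<lambda>w'. gen_op (gen s a) d w' + gen_op (gen s b) d w')"
proof -
  have h: "cons_nf (gen s (a + b)) = (\<lambda>w w'. cons_nf (gen s a) w w' + cons_nf (gen s b) w w')"
    by (intro ext) (rule cons_nf_add)
  show ?thesis unfolding gen_op_def h by (intro ext) (rule lin_ext_kernel_add)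
qed

lemma gen_op_scale:
  "gen_op (gen s (cscale c (a::'a))) d = (\<lambda>w'. side_scale s c * gen_op (gen s a) d w')"
proof -
  have h: "cons_nf (gen s (cscale c a)) = (\<lambda>w w'. side_scale s c * cons_nf (gen s a) w w')"
    by (intro ext) (rule cons_nf_scale)
  show ?thesis unfolding gen_op_def h by (intro ext) (rule lin_ext_kernel_smult)
qed

lemma gen_op_one: "normal d \<Longrightarrow> gen_op (gen s (1::'a)) d = d"
proof -
  assume d: "normal d"
  have "gen_op (gen s (1::'a)) d = lin_ext (\<lambda>w w'. if w' = w then 1 else 0) d"
    unfolding gen_op_def
    by (rule lin_ext_cong) (use d in \<open>auto simp: cons_nf_one fa_word_def dest: normal_reduced\<close>)
  also have "\<dots> = d" by (rule lin_ext_delta_id[OF normal_fin_supp[OF d]])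
  finally show ?thesis .
qed

lemma gen_op_gen_op:
  "normal d \<Longrightarrow> gen_op (gen s (a::'a)) (gen_op (gen s b) d) = gen_op (gen s (side_mult s a b)) d"
proof -
  assume d: "normal d"
  have "gen_op (gen s a) (gen_op (gen s b) d) =
      lin_ext (\<lambda>w. gen_op (gen s a) (cons_nf (gen s b) w)) d"
    unfolding gen_op_def[of "gen s b"]
    by (rule gen_op_lin_ext[OF normal_fin_supp[OF d]])
      (use d in \<open>auto intro: normal_cons_nf dest: normal_reduced\<close>)
  also have "\<dots> = gen_op (gen s (side_mult s a b)) d"
    unfolding gen_op_def[of "gen s (side_mult s a b)"]
    by (rule lin_ext_cong) (use d in \<open>auto simp: gen_op_cons_nf dest: normal_reduced\<close>)
  finally show ?thesis .
qed

lemma fa_op_dbl_rels: "(r::'a fa) \<in> dbl_rels \<Longrightarrow> normal d \<Longrightarrow> fa_op r d = (\<lambda>w. (0::complex))"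
proof -
  assume r: "r \<in> dbl_rels" and d: "normal d"
  have Inl_gen: "Inl x = gen True x" and Inr_gen: "Inr x = gen False x" for x :: 'a by simp_all
  have scale_sides: "side_scale True c = c" "side_scale False c = cnj c" for c
    unfolding side_scale_def by simp_all
  have mult_sides: "side_mult True a b = a * b" "side_mult False a b = b * a" for a b :: 'a
    unfolding side_mult_def by simp_all
  from r show ?thesis
    unfolding dbl_rels_def
    apply (elim UnE CollectE exE conjE singletonE insertE)
    apply (simp_all add: fa_op_ops fin_supp_fa_ops fin_supp_fa_word fa_op_single fa_op_double)
    apply (simp_all only: Inl_gen Inr_gen gen_op_add gen_op_scale scale_sides gen_op_one[OF d]
        gen_op_gen_op[OF d] mult_sides)
    apply (simp_all)
    done
qed

lemma fa_op_dbl_ideal: "(f::'a fa) \<in> dbl_ideal \<Longrightarrow> normal d \<Longrightarrow> fa_op f d = (\<lambda>w. (0::complex))"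
proof (induction f arbitrary: d rule: dbl_ideal.induct)
  case (rel r) then show ?case by (rule fa_op_dbl_rels)
next
  case zero show ?case by (rule fa_op_zero)
next
  case (add f g) then show ?case by (simp add: fa_op_ops fin_supp_dbl_ideal)
next
  case (smult f c) then show ?case by (simp add: fa_op_ops fin_supp_dbl_ideal)
next
  case (mult_left f g)
  then have "fa_op (fa_mul g f) d = fa_op g (fa_op f d)"
    by (intro fa_op_mul) (auto simp: fin_supp_dbl_ideal fa_carrier_iff_fin_supp)
  then show ?case using mult_left by (simp add: fa_op_zero_right)
next
  case (mult_right f g)
  then have "fa_op (fa_mul f g) d = fa_op f (fa_op g d)"
    by (intro fa_op_mul) (auto simp: fin_supp_dbl_ideal fa_carrier_iff_fin_supp)
  then show ?case using mult_right by (simp add: normal_fa_op fa_carrier_iff_fin_supp)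
qed

lemma word_op_reduced: "reduced u \<Longrightarrow> word_op u (fa_word []) = fa_word (u::('a+'a) list)"
proof (induction u)
  case Nil then show ?case by simp
next
  case (Cons g u)
  then have "reduced u" by (simp add: reduced_Cons)
  then have "word_op (g # u) (fa_word []) = gen_op g (fa_word u)" using Cons by simp
  also have "\<dots> = cons_nf g u" unfolding gen_op_def fa_word_def
    by (rule ext, subst lin_ext_delta) simp
  also have "\<dots> = fa_word (g # u)" by (rule cons_nf_reduced[OF Cons.prems])
  finally show ?case .
qed

lemma nf_normal: "normal e \<Longrightarrow> nf e = (e::'a fa)"
proof -
  assume e: "normal e"
  have "nf e = lin_ext (\<lambda>w w'. if w' = w then 1 else 0) e"
    unfolding nf_def fa_op_def
  proof (rule lin_ext_cong)
    fix w assume "e w \<noteq> 0"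
    then have "reduced w" using normal_reduced[OF e] by blast
    then show "word_op w (fa_word []) = (\<lambda>w'. if w' = w then 1 else 0)"
      using word_op_reduced[of w] unfolding fa_word_def by simp
  qed
  also have "\<dots> = e" by (rule lin_ext_delta_id[OF normal_fin_supp[OF e]])
  finally show ?thesis .
qed

lemma nf_dbl_ideal: "(f::'a fa) \<in> dbl_ideal \<Longrightarrow> nf f = (\<lambda>w. 0)"
  unfolding nf_def by (rule fa_op_dbl_ideal) (auto intro: normal_fa_word)

lemma dbl_eq_gen_nf_Nil: "dbl_eq (fa_word [gen s (x::'a::cplx_unital_alg)]) (gen_nf s x [])"
proof -
  define S where "S \<equiv> {c. alg_coord x c \<noteq> 0} - {1}"
  have fS: "finite S" unfolding S_def using finite_alg_coord_support by auto
  have x: "x = (\<Sum>c\<in>insert 1 S. cscale (alg_coord x c) c)"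
    by (rule alg_coord_sum_eq[OF nontriv, symmetric]) (auto simp: fS S_def finite_alg_coord_support)
  have "dbl_eq (fa_word [gen s x])
      (\<lambda>w. \<Sum>c\<in>insert 1 S. fa_word [gen s (cscale (alg_coord x c) c)] w)"
    by (subst x, rule dbl_eq_gen_sum) (simp add: fS)
  also have "dbl_eq \<dots> (\<lambda>w. \<Sum>c\<in>insert 1 S. side_scale s (alg_coord x c) * fa_word [gen s c] w)"
    by (rule dbl_eq_sum) (auto simp: fS intro: dbl_eq_gen_scale)
  also have "(\<lambda>w. \<Sum>c\<in>insert 1 S. side_scale s (alg_coord x c) * fa_word [gen s c] w) =
     (\<lambda>w. side_scale s (alg_coord x 1) * fa_word [gen s 1] w +
       (\<Sum>c\<in>S. side_scale s (alg_coord x c) * fa_word [gen s c] w))"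
  proof -
    have "1 \<notin> S" by (simp add: S_def)
    then show ?thesis using fS by simp
  qed
  also have "dbl_eq \<dots> (\<lambda>w. side_scale s (alg_coord x 1) * fa_word [] w +
      (\<Sum>c\<in>S. side_scale s (alg_coord x c) * fa_word [gen s c] w))"
    by (rule dbl_eq_add[OF dbl_eq_smult[OF dbl_eq_gen_one] dbl_eq_refl])
  also have "\<dots> = gen_nf s x []"
    unfolding gen_nf_eq_sum[of s x] S_def ..
  finally show ?thesis .
qed

lemma dbl_eq_gen_nf: "dbl_eq (fa_word (gen s (x::'a::cplx_unital_alg) # t)) (gen_nf s x t)"
proof -
  define S where "S \<equiv> {c. alg_coord x c \<noteq> 0} - {1}"
  have "fa_word (gen s x # t) = fa_mul (fa_word [gen s x]) (fa_word t)" by (simp add: fa_mul_word)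
  also have "dbl_eq \<dots> (fa_mul (gen_nf s x []) (fa_word t))"
    by (rule dbl_eq_mul_right[OF fin_supp_fa_word dbl_eq_gen_nf_Nil])
  also have "fa_mul (gen_nf s x []) (fa_word t) = gen_nf s x t"
    unfolding gen_nf_eq_sum[of s x] S_def[symmetric]
    by (simp add: fa_mul_add_left fa_mul_smult_left fa_mul_sum_left fa_mul_word)
  finally show ?thesis .
qed

lemma dbl_eq_cons_nf: "reduced v \<Longrightarrow> dbl_eq (fa_word ((g::'a+'a) # v)) (cons_nf g v)"
proof (cases v)
  case Nil
  show ?thesis unfolding Nil cons_nf_def using dbl_eq_gen_nf[of "isl g" "gen_elem g" "[]"]
    by (simp add: gen_isl_gen_elem)
next
  case (Cons h t)
  assume r: "reduced v"
  show ?thesis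
  proof (cases "isl h = isl g")
    case True
    have "fa_word (g # v) =
        fa_mul (fa_word [gen (isl g) (gen_elem g), gen (isl g) (gen_elem h)]) (fa_word t)"
    proof -
      have "gen (isl g) (gen_elem h) = h" using True gen_isl_gen_elem[of h] by simp
      then show ?thesis by (simp add: fa_mul_word Cons gen_isl_gen_elem)
    qed
    also have "dbl_eq \<dots>
        (fa_mul (fa_word [gen (isl g) (side_mult (isl g) (gen_elem g) (gen_elem h))]) (fa_word t))"
      by (rule dbl_eq_mul_right[OF fin_supp_fa_word dbl_eq_gen_mult])
    also have "\<dots> = fa_word (gen (isl g) (side_mult (isl g) (gen_elem g) (gen_elem h)) # t)"
      by (simp add: fa_mul_word)
    also have "dbl_eq \<dots> (cons_nf g v)"
      unfolding cons_nf_def Cons using True by (simp add: dbl_eq_gen_nf)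
    finally show ?thesis .
  next
    case False
    show ?thesis unfolding cons_nf_def Cons
      using False dbl_eq_gen_nf[of "isl g" "gen_elem g" "h # t"]
      by (simp add: gen_isl_gen_elem)
  qed
qed

lemma dbl_eq_gen_op: "normal e \<Longrightarrow> dbl_eq (fa_mul (fa_word [g]) e) (gen_op (g::'a+'a) e)"
proof -
  assume e: "normal e"
  have "fa_mul (fa_word [g]) e = lin_ext (\<lambda>v. fa_word ([g] @ v)) e"
    by (simp add: fa_mul_fa_word_left word_shift_lin_ext[OF normal_fin_supp[OF e]])
  also have "dbl_eq \<dots> (lin_ext (cons_nf g) e)"
    by (rule dbl_eq_lin_ext[OF normal_fin_supp[OF e]])
      (use e in \<open>auto intro: dbl_eq_cons_nf dest: normal_reduced\<close>)
  finally show ?thesis unfolding gen_op_def .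
qed

lemma dbl_eq_word_op: "dbl_eq (fa_word u) (word_op u (fa_word ([]::('a+'a) list)))"
proof (induction u)
  case Nil then show ?case by (simp add: dbl_eq_refl)
next
  case (Cons g u)
  have "fa_word (g # u) = fa_mul (fa_word [g]) (fa_word u)" by (simp add: fa_mul_word)
  also have "dbl_eq \<dots> (fa_mul (fa_word [g]) (word_op u (fa_word [])))"
    by (rule dbl_eq_mul_left[OF fin_supp_fa_word Cons.IH])
  also have "dbl_eq \<dots> (gen_op g (word_op u (fa_word [])))"
    by (rule dbl_eq_gen_op, rule normal_word_op, rule normal_fa_word) simp
  finally show ?case by simp
qed

lemma dbl_eq_nf: "fin_supp f \<Longrightarrow> dbl_eq f (nf (f::'a fa))"
proof -
  assume f: "fin_supp f"
  have "f = lin_ext (\<lambda>w w'. if w' = w then 1 else 0) f" by (rule lin_ext_delta_id[symmetric, OF f])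
  also have "\<dots> = lin_ext fa_word f" unfolding fa_word_def ..
  also have "dbl_eq \<dots> (nf f)" unfolding nf_def fa_op_def
    by (rule dbl_eq_lin_ext[OF f]) (rule dbl_eq_word_op)
  finally show ?thesis .
qed

lemma dbl_eq_iff_nf: "fin_supp f \<Longrightarrow> fin_supp g \<Longrightarrow> dbl_eq f g \<longleftrightarrow> nf f = nf (g::'a fa)"
proof
  assume f: "fin_supp f" and g: "fin_supp g" and "dbl_eq f g"
  then have "(\<lambda>w. f w - g w) \<in> dbl_ideal" unfolding dbl_eq_iff_diff by simp
  then have "nf (\<lambda>w. f w - g w) = (\<lambda>w. 0)" by (rule nf_dbl_ideal)
  then show "nf f = nf g" unfolding nf_diff[OF f g] by (metis eq_iff_diff_eq_0 ext)
next
  assume f: "fin_supp f" and g: "fin_supp g" and "nf f = nf g"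
  then show "dbl_eq f g" using dbl_eq_nf[OF f] dbl_eq_nf[OF g] by (metis dbl_eq_sym dbl_eq_trans)
qed

lemma nf_fa_star: "fin_supp x \<Longrightarrow> nf (fa_star x) = fa_star (nf (x::'a fa))"
proof -
  assume x: "fin_supp x"
  have "dbl_eq (fa_star x) (fa_star (nf x))" by (rule dbl_eq_star[OF dbl_eq_nf[OF x]])
  then have "nf (fa_star x) = nf (fa_star (nf x))"
    using dbl_eq_iff_nf x by (metis normal_fa_star normal_nf[OF x] fin_supp_fa_star normal_fin_supp)
  also have "\<dots> = fa_star (nf x)" by (rule nf_normal[OF normal_fa_star[OF normal_nf[OF x]]])
  finally show ?thesis .
qed

lemma fa_op_nf: "fin_supp x \<Longrightarrow> normal e \<Longrightarrow> fa_op x e = fa_op (nf (x::'a fa)) e"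
proof -
  assume x: "fin_supp x" and e: "normal e"
  have "(\<lambda>w. x w - nf x w) \<in> dbl_ideal" using dbl_eq_nf[OF x] unfolding dbl_eq_iff_diff .
  then have "fa_op (\<lambda>w. x w - nf x w) e = (\<lambda>w. 0)" by (rule fa_op_dbl_ideal[OF _ e])
  then show ?thesis unfolding fa_op_diff[OF x normal_fin_supp[OF normal_nf[OF x]]]
    by (metis eq_iff_diff_eq_0 ext)
qed

lemma nf_fa_mul: "fin_supp x \<Longrightarrow> fin_supp y \<Longrightarrow> nf (fa_mul x y) = fa_op (nf x) (nf (y::'a fa))"
  by (simp add: nf_fa_mul_left fa_op_nf normal_nf)

end

section \<open>Top-degree coefficients\<close>

definition len_bounded :: "'a fa \<Rightarrow> nat \<Rightarrow> bool" where
  "len_bounded d m \<longleftrightarrow> (\<forall>w. d w \<noteq> 0 \<longrightarrow> length w \<le> m)"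

lemma len_bounded_fa_star: "len_bounded d m \<Longrightarrow> len_bounded (fa_star d) m"
  unfolding len_bounded_def fa_star_app by (metis complex_cnj_zero length_word_star)

lemma len_bounded_gen_op: "len_bounded e k \<Longrightarrow> len_bounded (gen_op g e) (Suc k)"
  unfolding len_bounded_def gen_op_def using length_cons_nf by (fastforce dest!: lin_ext_nonzeroD)

lemma len_bounded_word_op: "len_bounded e n \<Longrightarrow> len_bounded (word_op u e) (length u + n)"
  by (induction u) (auto intro: len_bounded_gen_op)

lemma len_bounded_fa_op: "len_bounded d m \<Longrightarrow> len_bounded e n \<Longrightarrow> len_bounded (fa_op d e) (m + n)"
proof -
  assume d: "len_bounded d m" and e: "len_bounded e n"
  show ?thesis unfolding len_bounded_def
  proof (intro allI impI)
    fix w assume "fa_op d e w \<noteq> 0"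
    then obtain u where "d u \<noteq> 0" "word_op u e w \<noteq> 0" unfolding fa_op_def
      by (blast dest: lin_ext_nonzeroD)
    then show "length w \<le> m + n" using d len_bounded_word_op[OF e, of u] unfolding len_bounded_def
      by fastforce
  qed
qed

context
  assumes nontriv: "(1::'a::cplx_unital_alg) \<noteq> 0"
begin

lemma gen_op_top:
  assumes g: "gen_elem (g::'a+'a) \<in> nonunit_basis" and e: "normal e" "len_bounded e k"
    and w: "reduced w" "length w = Suc k"
  shows "gen_op g e w = (if hd w = g then e (tl w) else 0)"
proof -
  let ?S = "{v. e v \<noteq> 0}"
  have fS: "finite ?S" using normal_fin_supp[OF e(1)] unfolding fin_supp_def .
  have coeff: "cons_nf g v w = (if v = tl w \<and> hd w = g then 1 else 0)" if v: "v \<in> ?S" for v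
  proof -
    have rv: "reduced v" and lv: "length v \<le> k" using v e unfolding normal_def len_bounded_def
      by auto
    show ?thesis
    proof (cases "\<exists>h t. v = h # t \<and> isl h = isl g")
      case True
      then obtain h t where ht: "v = h # t" "isl h = isl g" by blast
      have "cons_nf g v w = gen_nf (isl g) (side_mult (isl g) (gen_elem g) (gen_elem h)) t w"
        unfolding cons_nf_def ht using ht by simp
      also have "\<dots> = 0" using length_gen_nf[of "isl g" _ t w] w lv ht by fastforce
      finally have a0: "cons_nf g v w = 0" .
      have "\<not> (v = tl w \<and> hd w = g)"
      proof
        assume "v = tl w \<and> hd w = g"
        then have "w = g # h # t" using w(2) ht by (cases w) auto
        then show False using w(1) ht by (simp add: reduced_Cons may_follow_def)
      qed
      then show ?thesis using a0 by simp
    next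
      case False
      have "cons_nf g v = gen_nf (isl g) (gen_elem g) v"
        unfolding cons_nf_def using False by (cases v) auto
      also have "\<dots> = fa_word (g # v)" using gen_nf_basis[OF nontriv g] gen_isl_gen_elem by metis
      finally show ?thesis unfolding fa_word_app using w(2) by (cases w) auto
    qed
  qed
  have "gen_op g e w = (\<Sum>v\<in>?S. e v * cons_nf g v w)" unfolding gen_op_def lin_ext_def ..
  also have "\<dots> = (\<Sum>v\<in>?S. if v = tl w then (if hd w = g then e v else 0) else 0)"
    by (rule sum.cong) (auto simp: coeff)
  also have "\<dots> = (if hd w = g then e (tl w) else 0)"
    by (subst sum.delta[OF fS]) auto
  finally show ?thesis .
qed

lemma word_op_top:
  assumes u: "reduced u" and e: "normal (e::'a fa)" "len_bounded e n"
  shows "reduced w \<Longrightarrow> length w = length u + n \<Longrightarrow>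
    word_op u e w = (if take (length u) w = u then e (drop (length u) w) else (0::complex))"
  using u
proof (induction u arbitrary: w)
  case Nil then show ?case by simp
next
  case (Cons g u)
  obtain h t where w: "w = h # t" using Cons.prems by (cases w) auto
  have g: "gen_elem g \<in> nonunit_basis" and ru: "reduced u" using Cons.prems
    by (auto simp: reduced_Cons)
  have rt: "reduced t" using Cons.prems w by (simp add: reduced_Cons)
  have "word_op (g # u) e w = gen_op g (word_op u e) w" by simp
  also have "\<dots> = (if hd w = g then word_op u e (tl w) else 0)"
    by (rule gen_op_top[OF g normal_word_op[OF e(1)] len_bounded_word_op[OF e(2)]])
      (use Cons.prems in auto)
  also have "\<dots> =
      (if h = g then (if take (length u) t = u then e (drop (length u) t) else 0) else 0)"
    using Cons.IH[OF rt _ ru] Cons.prems w by simp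
  finally show ?case using w by auto
qed

lemma fa_op_top:
  assumes d: "normal (d::'a fa)" "len_bounded d m" and e: "normal e" "len_bounded e n"
    and w: "reduced w" "length w = m + n"
  shows "fa_op d e w = d (take m w) * e (drop m w)"
proof -
  let ?S = "{u. d u \<noteq> 0}"
  have fS: "finite ?S" using normal_fin_supp[OF d(1)] unfolding fin_supp_def .
  have coeff: "d u * word_op u e w = (if u = take m w then d u * e (drop m w) else 0)"
    if u: "u \<in> ?S" for u
  proof -
    have ru: "reduced u" and lu: "length u \<le> m" using u d unfolding normal_def len_bounded_def
      by auto
    show ?thesis
    proof (cases "length u = m")
      case True
      then show ?thesis using word_op_top[OF ru e w(1)] w(2) by auto
    next
      case False
      then have "length u < m" using lu by simp
      then have "word_op u e w = 0" using len_bounded_word_op[OF e(2), of u] w(2)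
        unfolding len_bounded_def by fastforce
      moreover have "u \<noteq> take m w" using \<open>length u < m\<close> w(2) by auto
      ultimately show ?thesis by simp
    qed
  qed
  have "fa_op d e w = (\<Sum>u\<in>?S. d u * word_op u e w)" unfolding fa_op_def lin_ext_def ..
  also have "\<dots> = (\<Sum>u\<in>?S. if u = take m w then d u * e (drop m w) else 0)"
    by (rule sum.cong) (auto simp: coeff)
  also have "\<dots> = d (take m w) * e (drop m w)"
    by (subst sum.delta[OF fS]) auto
  finally show ?thesis .
qed

lemma gen_op_eq_word_shift:
  "normal f \<Longrightarrow> (\<And>v. f v \<noteq> 0 \<Longrightarrow> reduced (g # v)) \<Longrightarrow> gen_op (g::'a+'a) f = word_shift [g] f"
proof -
  assume f: "normal f" and r: "\<And>v. f v \<noteq> 0 \<Longrightarrow> reduced (g # v)"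
  have "gen_op g f = lin_ext (\<lambda>v. fa_word ([g] @ v)) f"
    unfolding gen_op_def by (rule lin_ext_cong) (simp add: cons_nf_reduced[OF nontriv] r)
  also have "\<dots> = word_shift [g] f" by (rule word_shift_lin_ext[symmetric, OF normal_fin_supp[OF f]])
  finally show ?thesis .
qed

lemma word_op_eq_word_shift:
  "reduced u \<Longrightarrow> normal e \<Longrightarrow> (\<And>v. e v \<noteq> 0 \<Longrightarrow> reduced (u @ v)) \<Longrightarrow> word_op u e = word_shift u (e::'a fa)"
proof (induction u)
  case Nil then show ?case by (auto simp: word_shift_def)
next
  case (Cons g u)
  have ru: "reduced u" using Cons.prems by (simp add: reduced_Cons)
  have "\<And>v. e v \<noteq> 0 \<Longrightarrow> reduced (u @ v)"
    using Cons.prems by (auto simp: reduced_Cons)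
  then have IH: "word_op u e = word_shift u e" using Cons.IH ru Cons.prems by blast
  have "word_op (g # u) e = gen_op g (word_shift u e)" using IH by simp
  also have "\<dots> = word_shift [g] (word_shift u e)"
  proof (rule gen_op_eq_word_shift)
    show "normal (word_shift u e)" using IH normal_word_op[OF Cons.prems(2)] by metis
    fix v assume "word_shift u e v \<noteq> 0"
    then have "take (length u) v = u" "e (drop (length u) v) \<noteq> 0" unfolding word_shift_def
      by (auto split: if_splits)
    then show "reduced (g # v)" using Cons.prems(3) by (metis append_Cons append_take_drop_id)
  qed
  also have "\<dots> = word_shift (g # u) e" by (rule word_shift_Cons[symmetric])
  finally show ?case .
qed

lemma fa_op_eq_fa_mul: "normal d \<Longrightarrow> normal e \<Longrightarrow> (\<And>u v. d u \<noteq> 0 \<Longrightarrow> e v \<noteq> 0 \<Longrightarrow> reduced (u @ v)) \<Longrightarrow>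
  fa_op d e = fa_mul d (e::'a fa)"
proof -
  assume d: "normal d" and e: "normal e" and r: "\<And>u v. d u \<noteq> 0 \<Longrightarrow> e v \<noteq> 0 \<Longrightarrow> reduced (u @ v)"
  have "fa_op d e = lin_ext (\<lambda>u. word_shift u e) d"
    unfolding fa_op_def
  proof (rule lin_ext_cong)
    fix u assume "d u \<noteq> 0"
    then show "word_op u e = word_shift u e" using r d e
      by (intro word_op_eq_word_shift) (auto dest: normal_reduced)
  qed
  also have "\<dots> = fa_mul d e"
    by (simp add: fa_mul_lin_ext_left[OF normal_fin_supp[OF d]] fa_mul_fa_word_left)
  finally show ?thesis .
qed

end

section \<open>Sums of hermitian squares\<close>

lemma sum_mult_cnj_eq_0D:
  assumes "(\<Sum>i<(n::nat). z i * cnj (z i)) = 0" "i < n"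
  shows "z i = (0::complex)"
proof -
  have "complex_of_real (\<Sum>i<n. (cmod (z i))\<^sup>2) = 0"
    using assms(1) by (simp add: complex_norm_square[symmetric])
  then have "(\<Sum>i<n. (cmod (z i))\<^sup>2) = 0" by (simp only: of_real_eq_0_iff)
  then have "(cmod (z i))\<^sup>2 = 0"
    using sum_nonneg_eq_0_iff[of "{..<n}" "\<lambda>i. (cmod (z i))\<^sup>2"] assms(2) by simp
  then show ?thesis by simp
qed

lemma longest_supp_word:
  assumes "\<And>i. i < (n::nat) \<Longrightarrow> fin_supp (d i)" "i0 < n" "d i0 w0 \<noteq> 0"
  obtains i u where "i < n" "d i u \<noteq> 0" "length w0 \<le> length u"
    "\<And>j. j < n \<Longrightarrow> len_bounded (d j) (length u)"
proof -
  let ?W = "\<Union>i<n. {w. d i w \<noteq> 0}"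
  have "finite ?W" using assms(1) unfolding fin_supp_def by (intro finite_UN_I) auto
  then obtain u where u: "u \<in> ?W" "\<And>w. w \<in> ?W \<Longrightarrow> length w \<le> length u"
    using ex_has_greatest_nat[of "\<lambda>w. w \<in> ?W" w0 length "Suc (Max (length ` ?W))"] assms(2,3)
    by (auto simp: le_imp_less_Suc)
  then show ?thesis using that assms(2,3) unfolding len_bounded_def by blast
qed

context
  assumes nontriv: "(1::'a::cplx_unital_alg) \<noteq> 0"
begin

lemma normal_sum_mult_star_eq_0:
  assumes d: "\<And>i. i < (n::nat) \<Longrightarrow> normal (d i :: 'a fa)"
    and sum: "\<And>w. (\<Sum>i<n. fa_op (d i) (fa_star (d i)) w) = 0"
  shows "i < n \<Longrightarrow> d i = (\<lambda>w. 0)"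
proof (rule ccontr)
  assume "i < n" "d i \<noteq> (\<lambda>w. 0)"
  then obtain w0 where "d i w0 \<noteq> 0" by auto
  then obtain i1 u where i1: "i1 < n" "d i1 u \<noteq> 0"
    and bd: "\<And>j. j < n \<Longrightarrow> len_bounded (d j) (length u)"
    using longest_supp_word[of n d i w0] d \<open>i < n\<close> normal_fin_supp by metis
  have u: "reduced u" using d i1 normal_reduced by blast
  have "fa_op (d j) (fa_star (d j)) (u @ word_star u) = d j u * cnj (d j u)" if "j < n" for j
    using fa_op_top[OF nontriv d[OF that] bd[OF that] normal_fa_star[OF d[OF that]]
        len_bounded_fa_star[OF bd[OF that]] reduced_append_word_star[OF u]]
    by (simp add: fa_star_app)
  then have "(\<Sum>j<n. d j u * cnj (d j u)) = 0"
    using sum[of "u @ word_star u"] by simp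
  then have "d i1 u = 0" using i1(1) by (rule sum_mult_cnj_eq_0D)
  then show False using i1(2) by simp
qed

lemma normal_sum_star_mult_eq_1:
  assumes d: "\<And>i. i < (n::nat) \<Longrightarrow> normal (d i :: 'a fa)"
    and sum: "\<And>w. (\<Sum>i<n. fa_op (fa_star (d i)) (d i) w) = fa_word [] w"
  shows "i < n \<Longrightarrow> d i w \<noteq> 0 \<Longrightarrow> w = []"
proof (rule ccontr)
  assume "i < n" "d i w \<noteq> 0" "w \<noteq> []"
  then obtain i1 u where i1: "i1 < n" "d i1 u \<noteq> 0" "length w \<le> length u"
    and bd: "\<And>j. j < n \<Longrightarrow> len_bounded (d j) (length u)"
    using longest_supp_word[of n d i w] d normal_fin_supp by metis
  then have "u \<noteq> []" using \<open>w \<noteq> []\<close> by auto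
  have u: "reduced u" using d i1 normal_reduced by blast
  have "fa_op (fa_star (d j)) (d j) (word_star u @ u) = d j u * cnj (d j u)" if "j < n" for j
    using fa_op_top[OF nontriv normal_fa_star[OF d[OF that]] len_bounded_fa_star[OF bd[OF that]]
        d[OF that] bd[OF that] reduced_word_star_append[OF u]]
    by (simp add: fa_star_app)
  then have "(\<Sum>j<n. d j u * cnj (d j u)) = 0"
    using sum[of "word_star u @ u"] \<open>u \<noteq> []\<close> by (simp add: fa_word_app)
  then have "d i1 u = 0" using i1(1) by (rule sum_mult_cnj_eq_0D)
  then show False using i1(2) by simp
qed

lemma nf_sum_mult_star:
  assumes "\<And>i. i < (n::nat) \<Longrightarrow> fin_supp (x i :: 'a fa)"
  shows "nf (\<lambda>w. \<Sum>i<n. fa_mul (x i) (fa_star (x i)) w) =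
    (\<lambda>w. \<Sum>i<n. fa_op (nf (x i)) (fa_star (nf (x i))) w)"
proof -
  have "nf (\<lambda>w. \<Sum>i<n. fa_mul (x i) (fa_star (x i)) w) =
      (\<lambda>w. \<Sum>i<n. nf (fa_mul (x i) (fa_star (x i))) w)"
    by (rule nf_sum) (auto intro: fin_supp_fa_mul fin_supp_fa_star assms)
  also have "\<dots> = (\<lambda>w. \<Sum>i<n. fa_op (nf (x i)) (fa_star (nf (x i))) w)"
    by (rule ext, rule sum.cong[OF refl])
      (simp add: assms nf_fa_mul[OF nontriv] nf_fa_star[OF nontriv] fin_supp_fa_star)
  finally show ?thesis .
qed

lemma nf_sum_star_mult:
  assumes "\<And>i. i < (n::nat) \<Longrightarrow> fin_supp (x i :: 'a fa)"
  shows "nf (\<lambda>w. \<Sum>i<n. fa_mul (fa_star (x i)) (x i) w) =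
    (\<lambda>w. \<Sum>i<n. fa_op (fa_star (nf (x i))) (nf (x i)) w)"
proof -
  have "nf (\<lambda>w. \<Sum>i<n. fa_mul (fa_star (x i)) (x i) w) =
      (\<lambda>w. \<Sum>i<n. nf (fa_mul (fa_star (x i)) (x i)) w)"
    by (rule nf_sum) (auto intro: fin_supp_fa_mul fin_supp_fa_star assms)
  also have "\<dots> = (\<lambda>w. \<Sum>i<n. fa_op (fa_star (nf (x i))) (nf (x i)) w)"
    by (rule ext, rule sum.cong[OF refl])
      (simp add: assms nf_fa_mul[OF nontriv] nf_fa_star[OF nontriv] fin_supp_fa_star)
  finally show ?thesis .
qed

end

lemma dbl_ordered:
  fixes x :: "nat \<Rightarrow> 'a::cplx_unital_alg fa"
  assumes x: "\<forall>i<n. x i \<in> fa_carrier"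
    and sum: "dbl_eq (\<lambda>w. \<Sum>i<n. fa_mul (x i) (fa_star (x i)) w) (\<lambda>_. 0)"
  shows "\<forall>i<n. dbl_eq (x i) (\<lambda>_. 0)"
proof (cases "(1::'a) = 0")
  case True
  then show ?thesis using dbl_eq_zero_if_trivial[OF True] x by (simp add: fa_carrier_iff_fin_supp)
next
  case nontriv: False
  have x: "\<And>i. i < n \<Longrightarrow> fin_supp (x i)" using x fa_carrier_iff_fin_supp by blast
  have "fin_supp (\<lambda>w. \<Sum>i<n. fa_mul (x i) (fa_star (x i)) w)"
    by (rule fin_supp_sum) (auto intro: fin_supp_fa_mul fin_supp_fa_star x)
  then have "nf (\<lambda>w. \<Sum>i<n. fa_mul (x i) (fa_star (x i)) w) = nf (\<lambda>_. 0)"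
    using sum dbl_eq_iff_nf[OF nontriv _ fin_supp_zero] by simp
  then have "\<And>i. i < n \<Longrightarrow> nf (x i) = (\<lambda>_. 0)"
    by (intro normal_sum_mult_star_eq_0[OF nontriv])
      (auto simp: nf_sum_mult_star[OF nontriv] x nf_zero normal_nf fun_eq_iff)
  then show ?thesis
    using dbl_eq_iff_nf[OF nontriv] x by (simp add: fin_supp_zero nf_zero)
qed

lemma dbl_sum_star_mult_eq_one_imp_scalar:
  fixes x :: "nat \<Rightarrow> 'a::cplx_unital_alg fa"
  assumes x: "\<forall>j<n. x j \<in> fa_carrier"
    and sum: "dbl_eq (\<lambda>w. \<Sum>j<n. fa_mul (fa_star (x j)) (x j) w) fa_one"
  shows "\<forall>j<n. \<exists>c. dbl_eq (x j) (fa_smult c fa_one)"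
proof (cases "(1::'a) = 0")
  case True
  then have "dbl_eq (x j) (fa_smult 0 fa_one)" if "j < n" for j
    using dbl_eq_zero_if_trivial[OF True] x that by (simp add: fa_carrier_iff_fin_supp fa_smult_app)
  then show ?thesis by blast
next
  case nontriv: False
  have x: "\<And>i. i < n \<Longrightarrow> fin_supp (x i)" using x fa_carrier_iff_fin_supp by blast
  have "nf (fa_one::'a fa) = fa_word []"
    unfolding fa_one_def by (simp add: nf_normal[OF nontriv] normal_fa_word)
  moreover have "fin_supp (\<lambda>w. \<Sum>j<n. fa_mul (fa_star (x j)) (x j) w)"
    by (rule fin_supp_sum) (auto intro: fin_supp_fa_mul fin_supp_fa_star x)
  then have "nf (\<lambda>w. \<Sum>j<n. fa_mul (fa_star (x j)) (x j) w) = nf fa_one"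
    using sum dbl_eq_iff_nf[OF nontriv _ fin_supp_fa_one] by simp
  ultimately have "(\<lambda>w. \<Sum>j<n. fa_op (fa_star (nf (x j))) (nf (x j)) w) = fa_word []"
    by (simp add: nf_sum_star_mult[OF nontriv] x)
  then have supp: "nf (x j) w = 0" if "j < n" "w \<noteq> []" for j w
    using normal_sum_star_mult_eq_1[OF nontriv, of n "\<lambda>j. nf (x j)" j w] that
    by (auto simp: normal_nf x fun_eq_iff)
  show ?thesis
  proof (intro allI impI exI)
    fix j assume "j < n"
    have "nf (x j) = fa_smult (nf (x j) []) fa_one"
      using supp[OF \<open>j < n\<close>] by (auto simp: fa_smult_app fa_one_def fa_word_app)
    then show "dbl_eq (x j) (fa_smult (nf (x j) []) fa_one)"
      using dbl_eq_nf[OF nontriv x[OF \<open>j < n\<close>]] by simp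
  qed
qed

section \<open>Elements of the algebra\<close>

lemma unimodular_multiple_of_gram_eq:
  fixes v u :: "'i \<Rightarrow> complex"
  assumes gram: "\<And>i j. i \<in> I \<Longrightarrow> j \<in> I \<Longrightarrow> cnj (v i) * v j = cnj (u i) * u j"
  shows "\<exists>l. cmod l = 1 \<and> (\<forall>i\<in>I. v i = l * u i)"
proof (cases "\<exists>i0\<in>I. v i0 \<noteq> 0")
  case True
  then obtain i0 where i0: "i0 \<in> I" "v i0 \<noteq> 0" by blast
  have "(cmod (v i0))\<^sup>2 = (cmod (u i0))\<^sup>2"
    using arg_cong[OF gram[OF i0(1) i0(1)], of cmod] by (simp add: norm_mult power2_eq_square)
  then have norm: "cmod (v i0) = cmod (u i0)" by (simp add: power2_eq_iff_nonneg)
  then have u0: "u i0 \<noteq> 0" using i0 by auto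
  define l where "l = v i0 / u i0"
  have "cnj (u i0) / cnj (v i0) = l"
    using gram[OF i0(1) i0(1)] u0 i0(2) unfolding l_def by (simp add: field_simps)
  then have "v j = l * u j" if "j \<in> I" for j
    using gram[OF i0(1) that] i0(2) by (simp add: field_simps)
  moreover have "cmod l = 1" using norm u0 unfolding l_def by (simp add: norm_divide)
  ultimately show ?thesis by blast
next
  case False
  then have "u i = 0" if "i \<in> I" for i using gram[OF that that] that by auto
  then show ?thesis using False by (intro exI[of _ 1]) auto
qed

definition low_words :: "('a::cplx_unital_alg + 'a) list set" where
  "low_words = insert [] ((\<lambda>c. [Inl c]) ` nonunit_basis)"

definition low_supp :: "'a::cplx_unital_alg fa \<Rightarrow> bool" where
  "low_supp f \<longleftrightarrow> (\<forall>w. f w \<noteq> 0 \<longrightarrow> w \<in> low_words)"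

lemma low_supp_gen_nf_Nil: "low_supp (gen_nf True a [])"
  unfolding low_supp_def
proof (intro allI impI)
  fix w assume w: "gen_nf True a [] w \<noteq> 0"
  show "w \<in> low_words"
  proof (cases w)
    case Nil
    then show ?thesis by (simp add: low_words_def)
  next
    case (Cons g t)
    then have "t = [] \<and> isl g \<and> gen_elem g \<noteq> 1 \<and> alg_coord a (gen_elem g) \<noteq> 0"
      using w unfolding gen_nf_def side_scale_def by (auto split: if_splits)
    then show ?thesis
      using Cons alg_coord_nonzeroD[of a "gen_elem g"] gen_isl_gen_elem[of g]
      unfolding low_words_def nonunit_basis_def by (auto intro!: image_eqI[of _ _ "gen_elem g"])
  qed
qed

lemma nf_dbl_emb: "nf (dbl_emb a) = gen_nf True a []"
proof -
  have "nf (dbl_emb a) = gen_op (Inl a) (fa_word [])"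
    unfolding nf_def dbl_emb_def by (simp add: fa_op_fa_word)
  also have "\<dots> = cons_nf (Inl a) []"
    unfolding gen_op_def fa_word_def by (rule ext, subst lin_ext_delta) simp
  finally show ?thesis unfolding cons_nf_def by simp
qed

lemma low_supp_reduced_append:
  assumes f: "low_supp f" and g: "low_supp g" and u: "fa_star f u \<noteq> 0" and v: "g v \<noteq> 0"
  shows "reduced (u @ v)"
proof -
  have "word_star u \<in> low_words" using f u unfolding low_supp_def fa_star_app by simp
  then consider "word_star u = []" | c where "c \<in> nonunit_basis" "word_star u = [Inl c]"
    unfolding low_words_def by blast
  then have "u = [] \<or> (\<exists>c\<in>nonunit_basis. u = [Inr c])"
    by cases
      (metis word_star_simps(5) word_star_word_star, metis word_star_simps(1) word_star_word_star)
  moreover have "v = [] \<or> (\<exists>c\<in>nonunit_basis. v = [Inl c])"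
    using g v unfolding low_supp_def low_words_def by blast
  ultimately show ?thesis by (auto simp: reduced_Cons may_follow_def)
qed

lemma fa_mul_star_low_supp:
  assumes f: "low_supp f" and u: "u \<in> low_words" and v: "v \<in> low_words"
  shows "fa_mul (fa_star f) f (word_star u @ v) = cnj (f u) * f v"
proof -
  have Inr: "f [Inr c] = 0" "f [Inr c, Inl c'] = 0" for c c'
    using f unfolding low_supp_def low_words_def by auto
  obtain c c' where "u = [] \<or> u = [Inl c]" "v = [] \<or> v = [Inl c']"
    using u v unfolding low_words_def by blast
  then show ?thesis
    unfolding fa_mul_def by (auto simp: fa_star_app word_star_def Inr atMost_Suc numeral_2_eq_2)
qed

lemma low_supp_unimodular_multiple:
  assumes d: "low_supp d" and e: "low_supp e"
    and eq: "fa_mul (fa_star d) d = fa_mul (fa_star e) e"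
  shows "\<exists>l. cmod l = 1 \<and> d = (\<lambda>w. l * e w)"
proof -
  have "cnj (d u) * d v = cnj (e u) * e v" if "u \<in> low_words" "v \<in> low_words" for u v
    using fun_cong[OF eq, of "word_star u @ v"] fa_mul_star_low_supp[OF d that]
      fa_mul_star_low_supp[OF e that] by simp
  then obtain l where "cmod l = 1" "\<forall>w\<in>low_words. d w = l * e w"
    using unimodular_multiple_of_gram_eq[of low_words d e] by blast
  moreover have "d w = 0" "e w = 0" if "w \<notin> low_words" for w
    using d e that unfolding low_supp_def by auto
  ultimately have "cmod l = 1 \<and> d = (\<lambda>w. l * e w)"
    by (auto simp: fun_eq_iff)
  then show ?thesis ..
qed

context
  assumes nontriv: "(1::'a::cplx_unital_alg) \<noteq> 0"
begin

lemma len_bounded_of_star_mul: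
  assumes e: "normal (e::'a fa)" and bd: "len_bounded (fa_op (fa_star e) e) (m + m)"
  shows "len_bounded e m"
proof (rule ccontr)
  assume "\<not> len_bounded e m"
  then obtain w0 where w0: "e w0 \<noteq> 0" "m < length w0" unfolding len_bounded_def by force
  then obtain u where u: "e u \<noteq> 0" "length w0 \<le> length u" "len_bounded e (length u)"
    using longest_supp_word[of 1 "\<lambda>_. e" 0 w0] normal_fin_supp[OF e] by auto
  have "fa_op (fa_star e) e (word_star u @ u) = cnj (e u) * e u"
    using fa_op_top[OF nontriv normal_fa_star[OF e] len_bounded_fa_star[OF u(3)] e u(3)
        reduced_word_star_append[OF normal_reduced[OF e u(1)]]]
    by (simp add: fa_star_app)
  then have "length (word_star u @ u) \<le> m + m"
    using bd u(1) unfolding len_bounded_def by (metis mult_eq_0_iff complex_cnj_zero_iff)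
  then show False using u(2) w0(2) by simp
qed

lemma fa_op_star_mul_Inl_Inr:
  assumes "normal (f::'a fa)" "len_bounded f 1" "c \<in> nonunit_basis"
  shows "fa_op (fa_star f) f [Inl c, Inr c] = cnj (f [Inr c]) * f [Inr c]"
proof -
  have "reduced [Inl c, Inr c]" using assms(3) by (simp add: reduced_Cons may_follow_def)
  then show ?thesis
    using fa_op_top[OF nontriv normal_fa_star[OF assms(1)] len_bounded_fa_star[OF assms(2)] assms(1,2)]
    by (simp add: fa_star_app word_star_simps)
qed

lemma low_supp_of_star_mul_eq:
  assumes d: "low_supp d" "normal d" and e: "normal (e::'a fa)"
    and eq: "fa_op (fa_star d) d = fa_op (fa_star e) e"
  shows "low_supp e"
proof -
  have d1: "len_bounded d 1" using d(1) unfolding low_supp_def low_words_def len_bounded_def by auto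
  have e1: "len_bounded e 1"
    using len_bounded_of_star_mul[OF e] len_bounded_fa_op[OF len_bounded_fa_star[OF d1] d1] eq
    by simp
  have no_Inr: "e [Inr c] = 0" if "c \<in> nonunit_basis" for c
  proof -
    have "d [Inr c] = 0" using d(1) unfolding low_supp_def low_words_def by auto
    then have "cnj (e [Inr c]) * e [Inr c] = 0"
      using fa_op_star_mul_Inl_Inr[OF d(2) d1 that] fa_op_star_mul_Inl_Inr[OF e e1 that] eq by simp
    then show ?thesis by simp
  qed
  show ?thesis
    unfolding low_supp_def
  proof (intro allI impI)
    fix w assume w: "e w \<noteq> 0"
    then have len: "length w \<le> 1" and red: "reduced w"
      using e e1 unfolding len_bounded_def by (auto dest: normal_reduced)
    show "w \<in> low_words"
    proof (cases w)
      case Nil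
      then show ?thesis by (simp add: low_words_def)
    next
      case (Cons g t)
      with len have t: "t = []" by simp
      with Cons red have g: "gen_elem g \<in> nonunit_basis" by (simp add: reduced_Cons)
      show ?thesis
      proof (cases g)
        case (Inl c)
        then show ?thesis using Cons t g by (simp add: low_words_def)
      next
        case (Inr c)
        then show ?thesis using Cons t g w no_Inr by simp
      qed
    qed
  qed
qed

end

lemma dbl_emb_unimodular_of_star_mul_eq:
  fixes a :: "'a::cplx_unital_alg"
  assumes y: "y \<in> fa_carrier"
    and eq: "dbl_eq (fa_mul (fa_star (dbl_emb a)) (dbl_emb a)) (fa_mul (fa_star y) y)"
  shows "\<exists>l. cmod l = 1 \<and> dbl_eq (dbl_emb a) (fa_smult l y)"
proof (cases "(1::'a) = 0")
  case True
  have x0: "dbl_eq (dbl_emb a) (\<lambda>w. 0)"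
    by (rule dbl_eq_zero_if_trivial[OF True]) (simp add: dbl_emb_def fin_supp_fa_word)
  have y0: "dbl_eq y (\<lambda>w. 0)"
    by (rule dbl_eq_zero_if_trivial[OF True]) (use y in \<open>simp add: fa_carrier_iff_fin_supp\<close>)
  have "dbl_eq (dbl_emb a) (fa_smult 1 y)"
    using dbl_eq_trans[OF x0 dbl_eq_sym[OF y0]] by (simp add: fa_smult_app)
  then show ?thesis by (intro exI[of _ 1]) simp
next
  case nontriv: False
  have x: "fin_supp (dbl_emb a)" and y: "fin_supp y"
    using y fin_supp_fa_word by (auto simp: dbl_emb_def fa_carrier_iff_fin_supp)
  define d e where "d = nf (dbl_emb a)" and "e = nf y"
  have d: "low_supp d" "normal d" and e: "normal e"
    unfolding d_def e_def using normal_nf[OF x] normal_nf[OF y] low_supp_gen_nf_Nil[of a]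
    by (simp_all add: nf_dbl_emb)
  have de: "fa_op (fa_star d) d = fa_op (fa_star e) e"
    using eq dbl_eq_iff_nf[OF nontriv] x y
    by (simp add: d_def e_def fin_supp_fa_mul fin_supp_fa_star nf_fa_mul[OF nontriv]
        nf_fa_star[OF nontriv])
  then have e_low: "low_supp e" by (rule low_supp_of_star_mul_eq[OF nontriv d e])
  have "fa_mul (fa_star d) d = fa_mul (fa_star e) e"
    using \<open>fa_op (fa_star d) d = fa_op (fa_star e) e\<close>
      fa_op_eq_fa_mul[OF nontriv normal_fa_star[OF d(2)] d(2) low_supp_reduced_append[OF d(1) d(1)]]
      fa_op_eq_fa_mul[OF nontriv normal_fa_star[OF e] e low_supp_reduced_append[OF e_low e_low]]
    by simp
  then obtain l where "cmod l = 1" "nf (dbl_emb a) = nf (fa_smult l y)"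
    using low_supp_unimodular_multiple[OF d(1) e_low] by (auto simp: d_def e_def nf_smult y)
  then show ?thesis using dbl_eq_iff_nf[OF nontriv x] y by (auto simp: fin_supp_fa_ops)
qed

theorem proposition2:
  shows
   "(\<forall>(n::nat) (x::nat \<Rightarrow> 'a::cplx_unital_alg fa).
        (\<forall>i<n. x i \<in> fa_carrier) \<and>
        dbl_eq (\<lambda>w. \<Sum>i<n. fa_mul (x i) (fa_star (x i)) w) (\<lambda>_. 0)
        \<longrightarrow> (\<forall>i<n. dbl_eq (x i) (\<lambda>_. 0)))
    \<and> (\<forall>(n::nat) (x::nat \<Rightarrow> 'a::cplx_unital_alg fa).
        (\<forall>j<n. x j \<in> fa_carrier) \<and>
        dbl_eq (\<lambda>w. \<Sum>j<n. fa_mul (fa_star (x j)) (x j) w) fa_one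
        \<longrightarrow> (\<forall>j<n. \<exists>c::complex. dbl_eq (x j) (fa_smult c fa_one)))
    \<and> (\<forall>(a::'a) (y::'a fa).
        y \<in> fa_carrier \<and>
        dbl_eq (fa_mul (fa_star (dbl_emb a)) (dbl_emb a)) (fa_mul (fa_star y) y)
        \<longrightarrow> (\<exists>l::complex. cmod l = 1 \<and> dbl_eq (dbl_emb a) (fa_smult l y)))"
  using dbl_ordered dbl_sum_star_mult_eq_one_imp_scalar dbl_emb_unimodular_of_star_mul_eq by blast

end
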